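(* Let $X_1,\dots,X_p$ be metrizable spaces and let $B\hookrightarrow A\twoheadrightarrow A/B$ be an exact sequence of Hausdorff topological Abelian groups such that the quotient map $A\to A/B$ admits a continuous local cross-section (a continuous section defined on some neighbourhood of the identity of $A/B$). Then every semi-layered function $f:X_{\le p}\times I^p\to A/B$ has a semi-layered lift $F:X_{\le p}\times I^p\to A$, i.e. $F$ composed with the quotient map equals $f$.
   Context: Let $I=(0,1]$. A continuous dissection over a metrizable space $X$ is a family $\mathcal{F}$ of continuous functions $X\to[0,1]$ containing the constants $0,1$ which is locally finite (each point has a neighbourhood $U$ with $\{\xi|_U:\xi\in\mathcal{F}\}$ finite); it is l-complete if closed under pointwise max, min and pointwise limits of convergent directed families. An $\mathcal{F}$-wedge is $\{(x,t):\xi_1(x)<t\le\xi_2(x)\}$, $\xi_1,\xi_2\in\mathcal{F}$. With $X_{\le i}=X_1\times\cdots\times X_i$, an ascending tuple $(\mathcal{F}_1,\dots,\mathcal{F}_p)$ has $\mathcal{F}_i$ a continuous dissection over $X_{\le i}$; an $(\mathcal{F}_1,\dots,\mathcal{F}_p)$-multiwedge is $\{(x_1,\dots,x_p,t_1,\dots,t_p):(x_1,\dots,x_i,t_i)\in C_i\ \forall i\}$ with $C_i$ an $\mathcal{F}_i$-wedge; minimal means nonempty and minimal under inclusion. Let $\beta:X_{\le p}\times I^p\to X_{\le p}$ be the projection. For a Hausdorff topological Abelian group $A$, a function $f:X_{\le p}\times I^p\to A$ is semi-layered if there is an ascending tuple of l-complete continuous dissections $(\mathcal{F}_1,\dots,\mathcal{F}_p)$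 (said to semi-control $f$) such that for every minimal multiwedge $C$ there is a continuous $f_C:\overline{\beta(C)}\to A$ with $f|_C=f_C\circ\beta|_C$. *)

theory Defs
  imports "HOL-Analysis.Analysis"
begin

text \<open>The spaces X_1,...,X_p are represented by topologies
  X 0, ..., X (p-1) on a common carrier type.  A point of
  X_{<= i} = X_1 x ... x X_i is an extensional function on the index set {..<i}
  (a point of product_topology X {..<i}).  A point of X_{<= p} x I^p is a pair
  (x, t) with x in X_{<= p} and t an extensional function {..<p} -> (0,1].\<close>

definition Xle :: "(nat \<Rightarrow> 'a topology) \<Rightarrow> nat \<Rightarrow> (nat \<Rightarrow> 'a) topology" where
  "Xle X i = product_topology X {..<i}"

definition Ipow :: "nat \<Rightarrow> (nat \<Rightarrow> real) set" where
  "Ipow p = PiE {..<p} (\<lambda>_. {0<..1})"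

definition dom_space :: "(nat \<Rightarrow> 'a topology) \<Rightarrow> nat \<Rightarrow> ((nat \<Rightarrow> 'a) \<times> (nat \<Rightarrow> real)) set" where
  "dom_space X p = topspace (Xle X p) \<times> Ipow p"

definition continuous_dissection :: "'b topology \<Rightarrow> ('b \<Rightarrow> real) set \<Rightarrow> bool" where
  "continuous_dissection Y F \<longleftrightarrow>
     (\<forall>\<xi>\<in>F. continuous_map Y (subtopology euclideanreal {0..1}) \<xi>
             \<and> (\<forall>y. y \<notin> topspace Y \<longrightarrow> \<xi> y = 0)) \<and>
     restrict (\<lambda>_. 0) (topspace Y) \<in> F \<and> restrict (\<lambda>_. 1) (topspace Y) \<in> F \<and>
     (\<forall>y\<in>topspace Y. \<exists>U. openin Y U \<and> y \<in> U \<and> finite ((\<lambda>\<xi>. restrict \<xi> U) ` F))"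

definition up_directed :: "('b \<Rightarrow> real) set \<Rightarrow> bool" where
  "up_directed D \<longleftrightarrow> D \<noteq> {} \<and> (\<forall>\<xi>\<in>D. \<forall>\<eta>\<in>D. \<exists>\<zeta>\<in>D. \<xi> \<le> \<zeta> \<and> \<eta> \<le> \<zeta>)"

definition down_directed :: "('b \<Rightarrow> real) set \<Rightarrow> bool" where
  "down_directed D \<longleftrightarrow> D \<noteq> {} \<and> (\<forall>\<xi>\<in>D. \<forall>\<eta>\<in>D. \<exists>\<zeta>\<in>D. \<zeta> \<le> \<xi> \<and> \<zeta> \<le> \<eta>)"

text \<open>The pointwise limit of such a
  directed family of functions is given by the net indexed by the family itself,
  ordered pointwise; for an upward directed family it is the pointwise supremum,
  for a downward directed family the pointwise infimum.\<close>
definition l_complete :: "('b \<Rightarrow> real) set \<Rightarrow> bool" where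
  "l_complete F \<longleftrightarrow>
     (\<forall>\<xi>\<in>F. \<forall>\<eta>\<in>F. (\<lambda>y. max (\<xi> y) (\<eta> y)) \<in> F \<and> (\<lambda>y. min (\<xi> y) (\<eta> y)) \<in> F) \<and>
     (\<forall>D\<subseteq>F. up_directed D \<and> (\<forall>y. bdd_above ((\<lambda>\<xi>. \<xi> y) ` D))
               \<longrightarrow> (\<lambda>y. SUP \<xi>\<in>D. \<xi> y) \<in> F) \<and>
     (\<forall>D\<subseteq>F. down_directed D \<and> (\<forall>y. bdd_below ((\<lambda>\<xi>. \<xi> y) ` D))
               \<longrightarrow> (\<lambda>y. INF \<xi>\<in>D. \<xi> y) \<in> F)"

text \<open>Ascending tuple (F_1,...,F_p) of l-complete continuous dissections;
  Fs i (i < p) is the dissection over X_{<= i+1}.\<close>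
definition ascending_lcomplete :: "(nat \<Rightarrow> 'a topology) \<Rightarrow> nat \<Rightarrow> (nat \<Rightarrow> ((nat \<Rightarrow> 'a) \<Rightarrow> real) set) \<Rightarrow> bool" where
  "ascending_lcomplete X p Fs \<longleftrightarrow>
     (\<forall>i<p. continuous_dissection (Xle X (Suc i)) (Fs i) \<and> l_complete (Fs i))"

definition multiwedge_of :: "(nat \<Rightarrow> 'a topology) \<Rightarrow> nat \<Rightarrow> (nat \<Rightarrow> (nat \<Rightarrow> 'a) \<Rightarrow> real)
     \<Rightarrow> (nat \<Rightarrow> (nat \<Rightarrow> 'a) \<Rightarrow> real) \<Rightarrow> ((nat \<Rightarrow> 'a) \<times> (nat \<Rightarrow> real)) set" where
  "multiwedge_of X p \<xi>1 \<xi>2 = {(x, t). (x, t) \<in> dom_space X p \<and>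
      (\<forall>i<p. \<xi>1 i (restrict x {..<Suc i}) < t i \<and> t i \<le> \<xi>2 i (restrict x {..<Suc i}))}"

definition is_multiwedge :: "(nat \<Rightarrow> 'a topology) \<Rightarrow> nat \<Rightarrow> (nat \<Rightarrow> ((nat \<Rightarrow> 'a) \<Rightarrow> real) set)
     \<Rightarrow> ((nat \<Rightarrow> 'a) \<times> (nat \<Rightarrow> real)) set \<Rightarrow> bool" where
  "is_multiwedge X p Fs C \<longleftrightarrow>
     (\<exists>\<xi>1 \<xi>2. (\<forall>i<p. \<xi>1 i \<in> Fs i \<and> \<xi>2 i \<in> Fs i) \<and> C = multiwedge_of X p \<xi>1 \<xi>2)"

definition minimal_multiwedge :: "(nat \<Rightarrow> 'a topology) \<Rightarrow> nat \<Rightarrow> (nat \<Rightarrow> ((nat \<Rightarrow> 'a) \<Rightarrow> real) set)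
     \<Rightarrow> ((nat \<Rightarrow> 'a) \<times> (nat \<Rightarrow> real)) set \<Rightarrow> bool" where
  "minimal_multiwedge X p Fs C \<longleftrightarrow> is_multiwedge X p Fs C \<and> C \<noteq> {} \<and>
     (\<forall>C'. is_multiwedge X p Fs C' \<and> C' \<noteq> {} \<and> C' \<subseteq> C \<longrightarrow> C' = C)"

definition semi_controls :: "(nat \<Rightarrow> 'a topology) \<Rightarrow> nat \<Rightarrow> (nat \<Rightarrow> ((nat \<Rightarrow> 'a) \<Rightarrow> real) set)
     \<Rightarrow> ((nat \<Rightarrow> 'a) \<times> (nat \<Rightarrow> real) \<Rightarrow> 'g::topological_space) \<Rightarrow> bool" where
  "semi_controls X p Fs f \<longleftrightarrow> ascending_lcomplete X p Fs \<and>
     (\<forall>C. minimal_multiwedge X p Fs C \<longrightarrow>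
        (\<exists>fC. continuous_map (subtopology (Xle X p) ((Xle X p) closure_of (fst ` C))) euclidean fC
              \<and> (\<forall>z\<in>C. f z = fC (fst z))))"

definition semi_layered :: "(nat \<Rightarrow> 'a topology) \<Rightarrow> nat
     \<Rightarrow> ((nat \<Rightarrow> 'a) \<times> (nat \<Rightarrow> real) \<Rightarrow> 'g::topological_space) \<Rightarrow> bool" where
  "semi_layered X p f \<longleftrightarrow> (\<exists>Fs. semi_controls X p Fs f)"

end

theory Submission
  imports Defs
begin

text \<open>A semi-layered f is given on each minimal multiwedge C by a continuous function g C of x
  on the closure of the projection of C. Only finitely many of these closures come near a point,
  so every point of X_{\<le>p} has a neighbourhood on which all g C oscillate inside the domain U of
  the local section s. Using a metric, one builds continuous functions 1 = \<mu> 0 \<ge> \<mu> 1 \<ge> ...,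
  locally eventually 0, and on the set where \<mu> (n+1) < \<mu> n a locally constant choice of a
  member of that neighbourhood cover. On the part of C where \<mu> (n+1) x < t_p \<le> \<mu> n x the lift
  is a + s (g C x - g C b), with b a base point in the chosen member and \<pi> a = g C b. Adding
  all \<mu> n to the last dissection and taking the l-complete hull gives a tuple each of whose
  minimal multiwedges lies in one old minimal multiwedge and one layer, and this tuple
  semi-controls the lift.\<close>

section \<open>Max-min combinations of real functions\<close>

lemma continuous_map_real_Max:
  assumes "finite A" "A \<noteq> {}" "\<And>a. a \<in> A \<Longrightarrow> continuous_map Z euclideanreal (f a)"
  shows "continuous_map Z euclideanreal (\<lambda>y. Max ((\<lambda>a. f a y) ` A))"
  using assms
proof (induction A rule: finite_ne_induct)
  case (insert x F)
  then have "continuous_map Z euclideanreal (\<lambda>y. max (f x y) (Max ((\<lambda>a. f a y) ` F)))"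
    by (intro continuous_intros) auto
  with insert show ?case by (simp add: Max_insert)
qed simp

lemma continuous_map_real_Min:
  assumes "finite A" "A \<noteq> {}" "\<And>a. a \<in> A \<Longrightarrow> continuous_map Z euclideanreal (f a)"
  shows "continuous_map Z euclideanreal (\<lambda>y. Min ((\<lambda>a. f a y) ` A))"
  using assms
proof (induction A rule: finite_ne_induct)
  case (insert x F)
  then have "continuous_map Z euclideanreal (\<lambda>y. min (f x y) (Min ((\<lambda>a. f a y) ` F)))"
    by (intro continuous_intros) auto
  with insert show ?case by (simp add: Min_insert)
qed simp

lemma up_directed_finite_upper_bound:
  assumes "up_directed D" "finite E" "E \<subseteq> D"
  obtains \<zeta> where "\<zeta> \<in> D" "\<forall>\<xi>\<in>E. \<xi> \<le> \<zeta>"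
proof -
  from assms(2,3) have "\<exists>\<zeta>\<in>D. \<forall>\<xi>\<in>E. \<xi> \<le> \<zeta>"
  proof (induction E rule: finite_induct)
    case empty then show ?case using assms(1) by (auto simp: up_directed_def)
  next
    case (insert x F)
    then obtain \<zeta> where "\<zeta> \<in> D" "\<forall>\<xi>\<in>F. \<xi> \<le> \<zeta>" by auto
    moreover obtain \<zeta>' where "\<zeta>' \<in> D" "x \<le> \<zeta>'" "\<zeta> \<le> \<zeta>'"
      using assms(1) insert calculation unfolding up_directed_def by blast
    ultimately show ?case using order_trans by blast
  qed
  then show thesis using that by blast
qed

lemma down_directed_finite_lower_bound:
  assumes "down_directed D" "finite E" "E \<subseteq> D"
  obtains \<zeta> where "\<zeta> \<in> D" "\<forall>\<xi>\<in>E. \<zeta> \<le> \<xi>"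
proof -
  from assms(2,3) have "\<exists>\<zeta>\<in>D. \<forall>\<xi>\<in>E. \<zeta> \<le> \<xi>"
  proof (induction E rule: finite_induct)
    case empty then show ?case using assms(1) by (auto simp: down_directed_def)
  next
    case (insert x F)
    then obtain \<zeta> where "\<zeta> \<in> D" "\<forall>\<xi>\<in>F. \<zeta> \<le> \<xi>" by auto
    moreover obtain \<zeta>' where "\<zeta>' \<in> D" "\<zeta>' \<le> x" "\<zeta>' \<le> \<zeta>"
      using assms(1) insert calculation unfolding down_directed_def by blast
    ultimately show ?case using order_trans by blast
  qed
  then show thesis using that by blast
qed

definition max_of_mins :: "('b \<Rightarrow> real) set set \<Rightarrow> 'b \<Rightarrow> real" where
  "max_of_mins T y = Max ((\<lambda>S. Min ((\<lambda>\<phi>. \<phi> y) ` S)) ` T)"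

definition maxmin_span :: "('b \<Rightarrow> real) set \<Rightarrow> ('b \<Rightarrow> real) set" where
  "maxmin_span G = max_of_mins ` {T. T \<noteq> {} \<and> (\<forall>S\<in>T. S \<noteq> {} \<and> S \<subseteq> G)}"

lemma maxmin_spanE:
  assumes "finite G" "h \<in> maxmin_span G"
  obtains T where "finite T" "T \<noteq> {}" "\<And>S. S \<in> T \<Longrightarrow> finite S \<and> S \<noteq> {} \<and> S \<subseteq> G"
    "h = max_of_mins T"
proof -
  obtain T where T: "T \<noteq> {}" "\<forall>S\<in>T. S \<noteq> {} \<and> S \<subseteq> G" "h = max_of_mins T"
    using assms(2) unfolding maxmin_span_def by blast
  have "finite T" using T(2) assms(1) by (metis Pow_iff finite_Pow_iff finite_subset subsetI)
  moreover have "finite S" if "S \<in> T" for S using T(2) assms(1) that by (meson finite_subset)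
  ultimately show thesis using that T by blast
qed

lemma maxmin_spanI:
  "T \<noteq> {} \<Longrightarrow> (\<And>S. S \<in> T \<Longrightarrow> S \<noteq> {} \<and> S \<subseteq> G) \<Longrightarrow> max_of_mins T \<in> maxmin_span G"
  unfolding maxmin_span_def by blast

lemma le_max_of_mins_iff:
  assumes "finite T" "T \<noteq> {}" "\<And>S. S \<in> T \<Longrightarrow> finite S \<and> S \<noteq> {}"
  shows "x \<le> max_of_mins T y \<longleftrightarrow> (\<exists>S\<in>T. \<forall>\<phi>\<in>S. x \<le> \<phi> y)"
  using assms by (simp add: max_of_mins_def Max_ge_iff Min_ge_iff)

lemma real_eqI_le_iff:
  fixes a b :: real
  assumes "\<And>x. x \<le> a \<longleftrightarrow> x \<le> b" shows "a = b"
  using assms[of a] assms[of b] by linarith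

lemma finite_maxmin_span: "finite G \<Longrightarrow> finite (maxmin_span G)"
proof -
  assume G: "finite G"
  have "{T. T \<noteq> {} \<and> (\<forall>S\<in>T. S \<noteq> {} \<and> S \<subseteq> G)} \<subseteq> Pow (Pow G)" by auto
  then show ?thesis using G unfolding maxmin_span_def by (meson finite_Pow_iff finite_subset finite_imageI)
qed

lemma maxmin_span_base:
  assumes "g \<in> G" shows "g \<in> maxmin_span G"
proof -
  have "max_of_mins {{g}} = g" by (simp add: max_of_mins_def fun_eq_iff)
  then show ?thesis using maxmin_spanI[of "{{g}}" G] assms by simp
qed

lemma maxmin_span_max:
  assumes G: "finite G" and "h1 \<in> maxmin_span G" "h2 \<in> maxmin_span G"
  shows "(\<lambda>y. max (h1 y) (h2 y)) \<in> maxmin_span G"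
proof -
  obtain T1 where T1: "finite T1" "T1 \<noteq> {}" "\<And>S. S \<in> T1 \<Longrightarrow> finite S \<and> S \<noteq> {} \<and> S \<subseteq> G"
    "h1 = max_of_mins T1"
    by (rule maxmin_spanE[OF G assms(2)]) blast
  obtain T2 where T2: "finite T2" "T2 \<noteq> {}" "\<And>S. S \<in> T2 \<Longrightarrow> finite S \<and> S \<noteq> {} \<and> S \<subseteq> G"
    "h2 = max_of_mins T2"
    by (rule maxmin_spanE[OF G assms(3)]) blast
  have le1: "x \<le> h1 y \<longleftrightarrow> (\<exists>S\<in>T1. \<forall>\<phi>\<in>S. x \<le> \<phi> y)" for x y
    unfolding T1(4) by (rule le_max_of_mins_iff) (use T1 in auto)
  have le2: "x \<le> h2 y \<longleftrightarrow> (\<exists>S\<in>T2. \<forall>\<phi>\<in>S. x \<le> \<phi> y)" for x y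
    unfolding T2(4) by (rule le_max_of_mins_iff) (use T2 in auto)
  have T: "finite (T1 \<union> T2)" "T1 \<union> T2 \<noteq> {}" "\<And>S. S \<in> T1 \<union> T2 \<Longrightarrow> finite S \<and> S \<noteq> {} \<and> S \<subseteq> G"
    using T1 T2 by auto
  have eq: "max_of_mins (T1 \<union> T2) = (\<lambda>y. max (h1 y) (h2 y))"
  proof (rule ext, rule real_eqI_le_iff)
    fix y x
    have "x \<le> max_of_mins (T1 \<union> T2) y \<longleftrightarrow> (\<exists>S\<in>T1 \<union> T2. \<forall>\<phi>\<in>S. x \<le> \<phi> y)"
      using T by (intro le_max_of_mins_iff) auto
    also have "\<dots> \<longleftrightarrow> (\<exists>S\<in>T1. \<forall>\<phi>\<in>S. x \<le> \<phi> y) \<or> (\<exists>S\<in>T2. \<forall>\<phi>\<in>S. x \<le> \<phi> y)"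
      by blast
    also have "\<dots> \<longleftrightarrow> x \<le> max (h1 y) (h2 y)"
      by (simp only: le_max_iff_disj le1 le2)
    finally show "x \<le> max_of_mins (T1 \<union> T2) y \<longleftrightarrow> x \<le> max (h1 y) (h2 y)" .
  qed
  have "max_of_mins (T1 \<union> T2) \<in> maxmin_span G" by (rule maxmin_spanI) (use T in auto)
  with eq show ?thesis by simp
qed

lemma maxmin_span_min:
  assumes G: "finite G" and "h1 \<in> maxmin_span G" "h2 \<in> maxmin_span G"
  shows "(\<lambda>y. min (h1 y) (h2 y)) \<in> maxmin_span G"
proof -
  obtain T1 where T1: "finite T1" "T1 \<noteq> {}" "\<And>S. S \<in> T1 \<Longrightarrow> finite S \<and> S \<noteq> {} \<and> S \<subseteq> G"
    "h1 = max_of_mins T1"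
    by (rule maxmin_spanE[OF G assms(2)]) blast
  obtain T2 where T2: "finite T2" "T2 \<noteq> {}" "\<And>S. S \<in> T2 \<Longrightarrow> finite S \<and> S \<noteq> {} \<and> S \<subseteq> G"
    "h2 = max_of_mins T2"
    by (rule maxmin_spanE[OF G assms(3)]) blast
  have le1: "x \<le> h1 y \<longleftrightarrow> (\<exists>S\<in>T1. \<forall>\<phi>\<in>S. x \<le> \<phi> y)" for x y
    unfolding T1(4) by (rule le_max_of_mins_iff) (use T1 in auto)
  have le2: "x \<le> h2 y \<longleftrightarrow> (\<exists>S\<in>T2. \<forall>\<phi>\<in>S. x \<le> \<phi> y)" for x y
    unfolding T2(4) by (rule le_max_of_mins_iff) (use T2 in auto)
  define T where "T = {S1 \<union> S2 | S1 S2. S1 \<in> T1 \<and> S2 \<in> T2}"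
  have "T = (\<lambda>(S1, S2). S1 \<union> S2) ` (T1 \<times> T2)" unfolding T_def by auto
  then have T: "finite T" "T \<noteq> {}" "\<And>S. S \<in> T \<Longrightarrow> finite S \<and> S \<noteq> {} \<and> S \<subseteq> G"
    using T1 T2 by auto
  have eq: "max_of_mins T = (\<lambda>y. min (h1 y) (h2 y))"
  proof (rule ext, rule real_eqI_le_iff)
    fix y x
    have "x \<le> max_of_mins T y \<longleftrightarrow> (\<exists>S\<in>T. \<forall>\<phi>\<in>S. x \<le> \<phi> y)"
      using T by (intro le_max_of_mins_iff) auto
    also have "\<dots> \<longleftrightarrow> (\<exists>S\<in>T1. \<forall>\<phi>\<in>S. x \<le> \<phi> y) \<and> (\<exists>S\<in>T2. \<forall>\<phi>\<in>S. x \<le> \<phi> y)"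
    proof
      assume "\<exists>S\<in>T. \<forall>\<phi>\<in>S. x \<le> \<phi> y"
      then obtain S1 S2 where "S1 \<in> T1" "S2 \<in> T2" "\<forall>\<phi>\<in>S1 \<union> S2. x \<le> \<phi> y"
        unfolding T_def by blast
      then show "(\<exists>S\<in>T1. \<forall>\<phi>\<in>S. x \<le> \<phi> y) \<and> (\<exists>S\<in>T2. \<forall>\<phi>\<in>S. x \<le> \<phi> y)" by blast
    next
      assume "(\<exists>S\<in>T1. \<forall>\<phi>\<in>S. x \<le> \<phi> y) \<and> (\<exists>S\<in>T2. \<forall>\<phi>\<in>S. x \<le> \<phi> y)"
      then obtain S1 S2 where "S1 \<in> T1" "S2 \<in> T2" "\<forall>\<phi>\<in>S1 \<union> S2. x \<le> \<phi> y" by blast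
      then show "\<exists>S\<in>T. \<forall>\<phi>\<in>S. x \<le> \<phi> y" unfolding T_def by blast
    qed
    also have "\<dots> \<longleftrightarrow> x \<le> min (h1 y) (h2 y)"
      by (simp only: min.bounded_iff le1 le2)
    finally show "x \<le> max_of_mins T y \<longleftrightarrow> x \<le> min (h1 y) (h2 y)" .
  qed
  have "max_of_mins T \<in> maxmin_span G" by (rule maxmin_spanI) (use T in auto)
  with eq show ?thesis by simp
qed

lemma maxmin_span_continuous:
  assumes "finite G" "h \<in> maxmin_span G" "\<And>g. g \<in> G \<Longrightarrow> continuous_map Z euclideanreal g"
  shows "continuous_map Z euclideanreal h"
proof (rule maxmin_spanE[OF assms(1,2)])
  fix T assume T: "finite T" "T \<noteq> {}" "\<And>S. S \<in> T \<Longrightarrow> finite S \<and> S \<noteq> {} \<and> S \<subseteq> G"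
    and h: "h = max_of_mins T"
  show ?thesis unfolding h max_of_mins_def
    using T assms(3) by (intro continuous_map_real_Max continuous_map_real_Min) auto
qed

lemma maxmin_span_value:
  assumes "finite G" "h \<in> maxmin_span G"
  obtains g where "g \<in> G" "h y = g y"
proof (rule maxmin_spanE[OF assms])
  fix T assume T: "finite T" "T \<noteq> {}" "\<And>S. S \<in> T \<Longrightarrow> finite S \<and> S \<noteq> {} \<and> S \<subseteq> G"
    and h: "h = max_of_mins T"
  have "h y \<in> (\<lambda>S. Min ((\<lambda>\<phi>. \<phi> y) ` S)) ` T"
    unfolding h max_of_mins_def using T(1,2) by (intro Max_in) auto
  then obtain S where S: "S \<in> T" "h y = Min ((\<lambda>\<phi>. \<phi> y) ` S)" by blast
  then have "h y \<in> (\<lambda>\<phi>. \<phi> y) ` S" using T(3)[OF S(1)] by simp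
  then show thesis using that T(3)[OF S(1)] by blast
qed

section \<open>Continuous dissections and their l-complete hull\<close>

lemma continuous_dissection_continuous:
  "continuous_dissection Y F \<Longrightarrow> \<xi> \<in> F \<Longrightarrow> continuous_map Y euclideanreal \<xi>"
  unfolding continuous_dissection_def continuous_map_in_subtopology by blast

lemma continuous_dissection_outside:
  "continuous_dissection Y F \<Longrightarrow> \<xi> \<in> F \<Longrightarrow> y \<notin> topspace Y \<Longrightarrow> \<xi> y = 0"
  unfolding continuous_dissection_def by blast

lemma continuous_dissection_range:
  assumes "continuous_dissection Y F" "\<xi> \<in> F" shows "0 \<le> \<xi> y \<and> \<xi> y \<le> 1"
proof (cases "y \<in> topspace Y")
  case True
  with assms show ?thesis
    unfolding continuous_dissection_def continuous_map_in_subtopology by fastforce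
qed (simp add: continuous_dissection_outside[OF assms])

lemma continuous_dissection_zero:
  "continuous_dissection Y F \<Longrightarrow> restrict (\<lambda>_. 0) (topspace Y) \<in> F"
  unfolding continuous_dissection_def by blast

lemma continuous_dissection_one:
  "continuous_dissection Y F \<Longrightarrow> restrict (\<lambda>_. 1) (topspace Y) \<in> F"
  unfolding continuous_dissection_def by blast

lemma continuous_dissection_locally_finite:
  assumes "continuous_dissection Y F" "x \<in> topspace Y"
  obtains U where "openin Y U" "x \<in> U" "finite ((\<lambda>\<xi>. restrict \<xi> U) ` F)"
  using assms unfolding continuous_dissection_def by blast

lemma l_complete_max_min:
  assumes "l_complete F" "\<xi> \<in> F" "\<eta> \<in> F"
  shows "(\<lambda>y. max (\<xi> y) (\<eta> y)) \<in> F" and "(\<lambda>y. min (\<xi> y) (\<eta> y)) \<in> F"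
  using assms(1) unfolding l_complete_def using assms(2,3) by simp_all

lemma l_complete_SUP:
  assumes "l_complete F" "D \<subseteq> F" "up_directed D" "\<And>y. bdd_above ((\<lambda>\<xi>. \<xi> y) ` D)"
  shows "(\<lambda>y. SUP \<xi>\<in>D. \<xi> y) \<in> F"
  using assms(1) unfolding l_complete_def using assms(2-4) by simp

lemma l_complete_INF:
  assumes "l_complete F" "D \<subseteq> F" "down_directed D" "\<And>y. bdd_below ((\<lambda>\<xi>. \<xi> y) ` D)"
  shows "(\<lambda>y. INF \<xi>\<in>D. \<xi> y) \<in> F"
  using assms(1) unfolding l_complete_def using assms(2-4) by simp

lemma finite_restrict_image_mono:
  assumes "finite ((\<lambda>\<xi>. restrict \<xi> U) ` F)" "V \<subseteq> U"
  shows "finite ((\<lambda>\<xi>. restrict \<xi> V) ` F)"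
proof -
  have "(\<lambda>\<xi>. restrict \<xi> V) ` F = (\<lambda>k. restrict k V) ` ((\<lambda>\<xi>. restrict \<xi> U) ` F)"
    using assms(2) by (auto simp: image_image restrict_def fun_eq_iff intro!: image_cong)
  then show ?thesis using assms(1) by simp
qed

text \<open>The l-complete hull of a continuous dissection F, given neighbourhoods N x on which F has
  only finitely many restrictions.\<close>

definition local_maxmin_closure ::
    "'b topology \<Rightarrow> ('b \<Rightarrow> real) set \<Rightarrow> ('b \<Rightarrow> 'b set) \<Rightarrow> ('b \<Rightarrow> real) set" where
  "local_maxmin_closure Y F N = {h. (\<forall>y. y \<notin> topspace Y \<longrightarrow> h y = 0) \<and>
     (\<forall>x\<in>topspace Y. \<exists>k\<in>maxmin_span ((\<lambda>\<xi>. restrict \<xi> (N x)) ` F). \<forall>y\<in>N x. h y = k y)}"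

context
  fixes Y :: "'b topology" and F :: "('b \<Rightarrow> real) set" and N :: "'b \<Rightarrow> 'b set"
  assumes F: "continuous_dissection Y F"
    and N: "\<And>x. x \<in> topspace Y \<Longrightarrow> openin Y (N x) \<and> x \<in> N x \<and> finite ((\<lambda>\<xi>. restrict \<xi> (N x)) ` F)"
begin

lemma local_maxmin_closure_memI:
  "(\<And>y. y \<notin> topspace Y \<Longrightarrow> h y = 0) \<Longrightarrow>
   (\<And>x. x \<in> topspace Y \<Longrightarrow> \<exists>k\<in>maxmin_span ((\<lambda>\<xi>. restrict \<xi> (N x)) ` F). \<forall>y\<in>N x. h y = k y) \<Longrightarrow>
   h \<in> local_maxmin_closure Y F N"
  unfolding local_maxmin_closure_def by blast

lemma local_maxmin_closure_memE:
  assumes "h \<in> local_maxmin_closure Y F N" "x \<in> topspace Y"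
  obtains k where "k \<in> maxmin_span ((\<lambda>\<xi>. restrict \<xi> (N x)) ` F)" "\<forall>y\<in>N x. h y = k y"
  using assms unfolding local_maxmin_closure_def by blast

lemma local_maxmin_closure_outside:
  "h \<in> local_maxmin_closure Y F N \<Longrightarrow> y \<notin> topspace Y \<Longrightarrow> h y = 0"
  unfolding local_maxmin_closure_def by blast

lemma subset_local_maxmin_closure: "F \<subseteq> local_maxmin_closure Y F N"
proof
  fix \<xi> assume "\<xi> \<in> F"
  then show "\<xi> \<in> local_maxmin_closure Y F N"
    by (intro local_maxmin_closure_memI bexI[of _ "restrict \<xi> (N _)"] maxmin_span_base)
      (auto simp: continuous_dissection_outside[OF F])
qed

lemma local_maxmin_closure_max_min:
  assumes "h1 \<in> local_maxmin_closure Y F N" "h2 \<in> local_maxmin_closure Y F N"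
  shows "(\<lambda>y. max (h1 y) (h2 y)) \<in> local_maxmin_closure Y F N"
    and "(\<lambda>y. min (h1 y) (h2 y)) \<in> local_maxmin_closure Y F N"
proof -
  let ?G = "\<lambda>x. (\<lambda>\<xi>. restrict \<xi> (N x)) ` F"
  have "(\<exists>k\<in>maxmin_span (?G x). \<forall>y\<in>N x. max (h1 y) (h2 y) = k y) \<and>
        (\<exists>k\<in>maxmin_span (?G x). \<forall>y\<in>N x. min (h1 y) (h2 y) = k y)" if x: "x \<in> topspace Y" for x
  proof -
    obtain k1 where k1: "k1 \<in> maxmin_span (?G x)" "\<forall>y\<in>N x. h1 y = k1 y"
      using assms(1) x by (rule local_maxmin_closure_memE)
    obtain k2 where k2: "k2 \<in> maxmin_span (?G x)" "\<forall>y\<in>N x. h2 y = k2 y"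
      using assms(2) x by (rule local_maxmin_closure_memE)
    have fin: "finite (?G x)" using N[OF x] by blast
    show ?thesis
      by (intro conjI bexI[OF _ maxmin_span_max[OF fin k1(1) k2(1)]] bexI[OF _ maxmin_span_min[OF fin k1(1) k2(1)]])
        (simp_all add: k1(2) k2(2))
  qed
  then show "(\<lambda>y. max (h1 y) (h2 y)) \<in> local_maxmin_closure Y F N"
    and "(\<lambda>y. min (h1 y) (h2 y)) \<in> local_maxmin_closure Y F N"
    by (auto intro!: local_maxmin_closure_memI
        simp: local_maxmin_closure_outside[OF assms(1)] local_maxmin_closure_outside[OF assms(2)])
qed

lemma finite_restrict_local_maxmin_closure:
  assumes "x \<in> topspace Y" "D \<subseteq> local_maxmin_closure Y F N"
  shows "finite ((\<lambda>\<xi>. restrict \<xi> (N x)) ` D)"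
proof -
  let ?G = "(\<lambda>\<xi>. restrict \<xi> (N x)) ` F"
  have "(\<lambda>\<xi>. restrict \<xi> (N x)) ` D \<subseteq> (\<lambda>k. restrict k (N x)) ` maxmin_span ?G"
  proof
    fix r assume "r \<in> (\<lambda>\<xi>. restrict \<xi> (N x)) ` D"
    then obtain h where h: "h \<in> D" "r = restrict h (N x)" by blast
    have "h \<in> local_maxmin_closure Y F N" using h assms(2) by blast
    then obtain k where "k \<in> maxmin_span ?G" "\<forall>y\<in>N x. h y = k y"
      using assms(1) by (rule local_maxmin_closure_memE)
    then show "r \<in> (\<lambda>k. restrict k (N x)) ` maxmin_span ?G"
      using h(2) by (intro image_eqI[of _ _ k]) (auto simp: fun_eq_iff)
  qed
  then show ?thesis using finite_maxmin_span N[OF assms(1)] finite_subset by blast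
qed

lemma local_maxmin_closure_continuous:
  assumes h: "h \<in> local_maxmin_closure Y F N"
  shows "continuous_map Y (subtopology euclideanreal {0..1}) h"
proof -
  let ?G = "\<lambda>x. (\<lambda>\<xi>. restrict \<xi> (N x)) ` F"
  have "\<forall>x\<in>topspace Y. \<exists>k. k \<in> maxmin_span (?G x) \<and> (\<forall>y\<in>N x. h y = k y)"
  proof
    fix x assume x: "x \<in> topspace Y"
    obtain k where "k \<in> maxmin_span (?G x)" "\<forall>y\<in>N x. h y = k y"
      by (rule local_maxmin_closure_memE[OF h x])
    then show "\<exists>k. k \<in> maxmin_span (?G x) \<and> (\<forall>y\<in>N x. h y = k y)" by blast
  qed
  then obtain k where k: "\<forall>x\<in>topspace Y. k x \<in> maxmin_span (?G x) \<and> (\<forall>y\<in>N x. h y = k x y)"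
    by (rule bchoice[THEN exE])
  have "continuous_map Y euclideanreal h"
  proof (rule pasting_lemma[where I="topspace Y" and T=N and f=k])
    fix x assume x: "x \<in> topspace Y"
    show "openin Y (N x)" using N[OF x] by blast
    have "continuous_map (subtopology Y (N x)) euclideanreal g" if g: "g \<in> ?G x" for g
    proof -
      obtain \<xi> where \<xi>: "\<xi> \<in> F" "g = restrict \<xi> (N x)" using g by blast
      have "continuous_map (subtopology Y (N x)) euclideanreal \<xi>"
        by (rule continuous_map_from_subtopology[OF continuous_dissection_continuous[OF F \<xi>(1)]])
      then show ?thesis by (rule continuous_map_eq) (simp add: \<xi>(2))
    qed
    moreover have "finite (?G x)" "k x \<in> maxmin_span (?G x)" using k x N[OF x] by auto
    ultimately show "continuous_map (subtopology Y (N x)) euclideanreal (k x)"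
      using maxmin_span_continuous by blast
  next
    show "k i y = k j y" if "i \<in> topspace Y" "j \<in> topspace Y" "y \<in> topspace Y \<inter> N i \<inter> N j" for i j y
    proof -
      have "h y = k i y" using k that(1,3) by blast
      moreover have "h y = k j y" using k that(2,3) by blast
      ultimately show ?thesis by simp
    qed
    show "\<exists>j. j \<in> topspace Y \<and> x \<in> N j \<and> h x = k j x" if "x \<in> topspace Y" for x
      using k N that by blast
  qed
  moreover have "h x \<in> {0..1}" if x: "x \<in> topspace Y" for x
  proof -
    have "finite (?G x)" "k x \<in> maxmin_span (?G x)" using N[OF x] k x by auto
    then obtain g where "g \<in> ?G x" "k x x = g x" by (rule maxmin_span_value)
    then show ?thesis using k x N[OF x] continuous_dissection_range[OF F] by auto
  qed
  ultimately show ?thesis by (simp add: continuous_map_in_subtopology image_subset_iff)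
qed

lemma local_maxmin_closure_up_directed_bound:
  assumes x: "x \<in> topspace Y" and D: "D \<subseteq> local_maxmin_closure Y F N" "up_directed D"
  obtains \<zeta> where "\<zeta> \<in> D" "\<forall>\<xi>\<in>D. \<forall>y\<in>N x. \<xi> y \<le> \<zeta> y"
proof -
  obtain E where E: "E \<subseteq> D" "finite E" "(\<lambda>\<xi>. restrict \<xi> (N x)) ` D = (\<lambda>\<xi>. restrict \<xi> (N x)) ` E"
    using finite_subset_image[OF finite_restrict_local_maxmin_closure[OF x D(1)] order_refl] by blast
  obtain \<zeta> where \<zeta>: "\<zeta> \<in> D" "\<forall>\<xi>\<in>E. \<xi> \<le> \<zeta>"
    by (rule up_directed_finite_upper_bound[OF D(2) E(2,1)])
  have "\<xi> y \<le> \<zeta> y" if "\<xi> \<in> D" "y \<in> N x" for \<xi> y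
  proof -
    have "restrict \<xi> (N x) \<in> (\<lambda>\<xi>. restrict \<xi> (N x)) ` E" using E(3) that(1) by blast
    then obtain \<xi>' where "\<xi>' \<in> E" "restrict \<xi> (N x) = restrict \<xi>' (N x)" by blast
    then have "\<xi> y = \<xi>' y" "\<xi>' y \<le> \<zeta> y" using \<zeta>(2) that(2) by (auto simp: le_fun_def dest: fun_cong[where x=y])
    then show ?thesis by simp
  qed
  with \<zeta>(1) show thesis using that by blast
qed

lemma local_maxmin_closure_down_directed_bound:
  assumes x: "x \<in> topspace Y" and D: "D \<subseteq> local_maxmin_closure Y F N" "down_directed D"
  obtains \<zeta> where "\<zeta> \<in> D" "\<forall>\<xi>\<in>D. \<forall>y\<in>N x. \<zeta> y \<le> \<xi> y"
proof -
  obtain E where E: "E \<subseteq> D" "finite E" "(\<lambda>\<xi>. restrict \<xi> (N x)) ` D = (\<lambda>\<xi>. restrict \<xi> (N x)) ` E"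
    using finite_subset_image[OF finite_restrict_local_maxmin_closure[OF x D(1)] order_refl] by blast
  obtain \<zeta> where \<zeta>: "\<zeta> \<in> D" "\<forall>\<xi>\<in>E. \<zeta> \<le> \<xi>"
    by (rule down_directed_finite_lower_bound[OF D(2) E(2,1)])
  have "\<zeta> y \<le> \<xi> y" if "\<xi> \<in> D" "y \<in> N x" for \<xi> y
  proof -
    have "restrict \<xi> (N x) \<in> (\<lambda>\<xi>. restrict \<xi> (N x)) ` E" using E(3) that(1) by blast
    then obtain \<xi>' where "\<xi>' \<in> E" "restrict \<xi> (N x) = restrict \<xi>' (N x)" by blast
    then have "\<xi> y = \<xi>' y" "\<zeta> y \<le> \<xi>' y" using \<zeta>(2) that(2) by (auto simp: le_fun_def dest: fun_cong[where x=y])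
    then show ?thesis by simp
  qed
  with \<zeta>(1) show thesis using that by blast
qed

lemma local_maxmin_closure_SUP:
  assumes D: "D \<subseteq> local_maxmin_closure Y F N" "up_directed D"
  shows "(\<lambda>y. SUP \<xi>\<in>D. \<xi> y) \<in> local_maxmin_closure Y F N"
proof (rule local_maxmin_closure_memI)
  have ne: "D \<noteq> {}" using D(2) by (simp add: up_directed_def)
  show "(SUP \<xi>\<in>D. \<xi> y) = 0" if "y \<notin> topspace Y" for y
  proof -
    have "(SUP \<xi>\<in>D. \<xi> y) = (SUP \<xi>\<in>D. 0::real)"
      using D(1) local_maxmin_closure_outside[OF _ that] by (intro SUP_cong) auto
    with ne show ?thesis by simp
  qed
  fix x assume x: "x \<in> topspace Y"
  obtain \<zeta> where \<zeta>: "\<zeta> \<in> D" "\<forall>\<xi>\<in>D. \<forall>y\<in>N x. \<xi> y \<le> \<zeta> y"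
    by (rule local_maxmin_closure_up_directed_bound[OF x D])
  obtain k where k: "k \<in> maxmin_span ((\<lambda>\<xi>. restrict \<xi> (N x)) ` F)" "\<forall>y\<in>N x. \<zeta> y = k y"
    using subsetD[OF D(1) \<zeta>(1)] x by (rule local_maxmin_closure_memE)
  have "(SUP \<xi>\<in>D. \<xi> y) = \<zeta> y" if "y \<in> N x" for y
    using \<zeta> that ne by (intro antisym cSUP_least cSUP_upper bdd_aboveI2[of _ _ "\<zeta> y"]) auto
  then show "\<exists>k\<in>maxmin_span ((\<lambda>\<xi>. restrict \<xi> (N x)) ` F). \<forall>y\<in>N x. (SUP \<xi>\<in>D. \<xi> y) = k y"
    using k by auto
qed

lemma local_maxmin_closure_INF:
  assumes D: "D \<subseteq> local_maxmin_closure Y F N" "down_directed D"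
  shows "(\<lambda>y. INF \<xi>\<in>D. \<xi> y) \<in> local_maxmin_closure Y F N"
proof (rule local_maxmin_closure_memI)
  have ne: "D \<noteq> {}" using D(2) by (simp add: down_directed_def)
  show "(INF \<xi>\<in>D. \<xi> y) = 0" if "y \<notin> topspace Y" for y
  proof -
    have "(INF \<xi>\<in>D. \<xi> y) = (INF \<xi>\<in>D. 0::real)"
      using D(1) local_maxmin_closure_outside[OF _ that] by (intro INF_cong) auto
    with ne show ?thesis by simp
  qed
  fix x assume x: "x \<in> topspace Y"
  obtain \<zeta> where \<zeta>: "\<zeta> \<in> D" "\<forall>\<xi>\<in>D. \<forall>y\<in>N x. \<zeta> y \<le> \<xi> y"
    by (rule local_maxmin_closure_down_directed_bound[OF x D])
  obtain k where k: "k \<in> maxmin_span ((\<lambda>\<xi>. restrict \<xi> (N x)) ` F)" "\<forall>y\<in>N x. \<zeta> y = k y"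
    using subsetD[OF D(1) \<zeta>(1)] x by (rule local_maxmin_closure_memE)
  have "(INF \<xi>\<in>D. \<xi> y) = \<zeta> y" if "y \<in> N x" for y
    using \<zeta> that ne by (intro antisym cINF_greatest cINF_lower bdd_belowI2[of _ "\<zeta> y"]) auto
  then show "\<exists>k\<in>maxmin_span ((\<lambda>\<xi>. restrict \<xi> (N x)) ` F). \<forall>y\<in>N x. (INF \<xi>\<in>D. \<xi> y) = k y"
    using k by auto
qed

lemma continuous_dissection_local_maxmin_closure:
  "continuous_dissection Y (local_maxmin_closure Y F N)"
  unfolding continuous_dissection_def
proof (intro conjI ballI)
  show "continuous_map Y (subtopology euclideanreal {0..1}) h" if "h \<in> local_maxmin_closure Y F N" for h
    using that by (rule local_maxmin_closure_continuous)
  show "\<forall>y. y \<notin> topspace Y \<longrightarrow> h y = 0" if "h \<in> local_maxmin_closure Y F N" for h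
    using that local_maxmin_closure_outside by blast
  show "restrict (\<lambda>_. 0) (topspace Y) \<in> local_maxmin_closure Y F N"
    "restrict (\<lambda>_. 1) (topspace Y) \<in> local_maxmin_closure Y F N"
    using continuous_dissection_zero[OF F] continuous_dissection_one[OF F] subset_local_maxmin_closure
    by blast+
  show "\<exists>U. openin Y U \<and> x \<in> U \<and> finite ((\<lambda>\<xi>. restrict \<xi> U) ` local_maxmin_closure Y F N)"
    if "x \<in> topspace Y" for x
    using N[OF that] finite_restrict_local_maxmin_closure[OF that order_refl] by blast
qed

lemma l_complete_local_maxmin_closure: "l_complete (local_maxmin_closure Y F N)"
  unfolding l_complete_def
proof (intro conjI ballI allI impI)
  fix \<xi> \<eta> assume "\<xi> \<in> local_maxmin_closure Y F N" "\<eta> \<in> local_maxmin_closure Y F N"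
  then show "(\<lambda>y. max (\<xi> y) (\<eta> y)) \<in> local_maxmin_closure Y F N"
    and "(\<lambda>y. min (\<xi> y) (\<eta> y)) \<in> local_maxmin_closure Y F N"
    by (rule local_maxmin_closure_max_min)+
next
  fix D assume "D \<subseteq> local_maxmin_closure Y F N" "up_directed D \<and> (\<forall>y. bdd_above ((\<lambda>\<xi>. \<xi> y) ` D))"
  then show "(\<lambda>y. SUP \<xi>\<in>D. \<xi> y) \<in> local_maxmin_closure Y F N"
    using local_maxmin_closure_SUP by blast
next
  fix D assume "D \<subseteq> local_maxmin_closure Y F N" "down_directed D \<and> (\<forall>y. bdd_below ((\<lambda>\<xi>. \<xi> y) ` D))"
  then show "(\<lambda>y. INF \<xi>\<in>D. \<xi> y) \<in> local_maxmin_closure Y F N"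
    using local_maxmin_closure_INF by blast
qed

end

lemma continuous_dissection_l_complete_hull:
  assumes F: "continuous_dissection Y F"
  obtains L where "continuous_dissection Y L" "l_complete L" "F \<subseteq> L"
proof -
  have "\<forall>x\<in>topspace Y. \<exists>U. openin Y U \<and> x \<in> U \<and> finite ((\<lambda>\<xi>. restrict \<xi> U) ` F)"
    using F unfolding continuous_dissection_def by blast
  then obtain N where "\<forall>x\<in>topspace Y. openin Y (N x) \<and> x \<in> N x \<and> finite ((\<lambda>\<xi>. restrict \<xi> (N x)) ` F)"
    by (rule bchoice[THEN exE])
  then show thesis
    using that continuous_dissection_local_maxmin_closure[OF F] l_complete_local_maxmin_closure[OF F]
      subset_local_maxmin_closure[OF F] by blast
qed

lemma continuous_dissection_Un_eventually_vanishing: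
  fixes \<mu> :: "nat \<Rightarrow> 'b \<Rightarrow> real"
  assumes F: "continuous_dissection Y F"
    and cont: "\<And>n. continuous_map Y (subtopology euclideanreal {0..1}) (\<mu> n)"
    and outside: "\<And>n y. y \<notin> topspace Y \<Longrightarrow> \<mu> n y = 0"
    and vanish: "\<And>y. y \<in> topspace Y \<Longrightarrow> \<exists>V n. openin Y V \<and> y \<in> V \<and> (\<forall>m\<ge>n. \<forall>y'\<in>V. \<mu> m y' = 0)"
  shows "continuous_dissection Y (F \<union> range \<mu>)"
  unfolding continuous_dissection_def
proof (intro conjI ballI)
  show "continuous_map Y (subtopology euclideanreal {0..1}) \<xi>" if "\<xi> \<in> F \<union> range \<mu>" for \<xi>
    using that F cont unfolding continuous_dissection_def by blast
  show "\<forall>y. y \<notin> topspace Y \<longrightarrow> \<xi> y = 0" if "\<xi> \<in> F \<union> range \<mu>" for \<xi>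
    using that continuous_dissection_outside[OF F] outside by blast
  show "restrict (\<lambda>_. 0) (topspace Y) \<in> F \<union> range \<mu>" "restrict (\<lambda>_. 1) (topspace Y) \<in> F \<union> range \<mu>"
    using continuous_dissection_zero[OF F] continuous_dissection_one[OF F] by blast+
  fix y assume y: "y \<in> topspace Y"
  obtain U where U: "openin Y U" "y \<in> U" "finite ((\<lambda>\<xi>. restrict \<xi> U) ` F)"
    using continuous_dissection_locally_finite[OF F y] by blast
  obtain V n where V: "openin Y V" "y \<in> V" "\<forall>m\<ge>n. \<forall>y'\<in>V. \<mu> m y' = 0" using vanish[OF y] by blast
  let ?W = "U \<inter> V"
  have "restrict (\<mu> m) ?W \<in> (\<lambda>m. restrict (\<mu> m) ?W) ` {..<n} \<union> {restrict (\<lambda>_. 0) ?W}" for m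
  proof (cases "m < n")
    case False
    then have "\<forall>y'\<in>V. \<mu> m y' = 0" using V(3) by (simp add: not_less)
    then have "restrict (\<mu> m) ?W = restrict (\<lambda>_. 0) ?W" by (auto simp: fun_eq_iff)
    then show ?thesis by blast
  qed simp
  then have "(\<lambda>\<xi>. restrict \<xi> ?W) ` range \<mu> \<subseteq> (\<lambda>m. restrict (\<mu> m) ?W) ` {..<n} \<union> {restrict (\<lambda>_. 0) ?W}"
    by blast
  then have "finite ((\<lambda>\<xi>. restrict \<xi> ?W) ` range \<mu>)" by (rule finite_subset) simp
  moreover have "finite ((\<lambda>\<xi>. restrict \<xi> ?W) ` F)" using finite_restrict_image_mono[OF U(3)] by blast
  ultimately have "finite ((\<lambda>\<xi>. restrict \<xi> ?W) ` (F \<union> range \<mu>))" by (simp add: image_Un)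
  then show "\<exists>U. openin Y U \<and> y \<in> U \<and> finite ((\<lambda>\<xi>. restrict \<xi> U) ` (F \<union> range \<mu>))"
    using U V by blast
qed

lemma continuous_dissection_SUP_attained:
  assumes F: "continuous_dissection Y F" and y: "y \<in> topspace Y" and D: "D \<subseteq> F" "D \<noteq> {}"
  obtains \<xi> where "\<xi> \<in> D" "(SUP \<xi>\<in>D. \<xi> y) = \<xi> y"
proof -
  obtain N where N: "y \<in> N" "finite ((\<lambda>\<xi>. restrict \<xi> N) ` F)"
    using continuous_dissection_locally_finite[OF F y] by blast
  have "(\<lambda>\<xi>. \<xi> y) ` D \<subseteq> (\<lambda>k. k y) ` ((\<lambda>\<xi>. restrict \<xi> N) ` F)"
    using N(1) D(1) by (force simp: image_iff)
  then have fin: "finite ((\<lambda>\<xi>. \<xi> y) ` D)" using N(2) finite_subset by blast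
  have ne: "(\<lambda>\<xi>. \<xi> y) ` D \<noteq> {}" using D(2) by blast
  have "(SUP \<xi>\<in>D. \<xi> y) \<in> (\<lambda>\<xi>. \<xi> y) ` D"
    using cSup_eq_Max[OF fin ne] Max_in[OF fin ne] by simp
  then show thesis using that by blast
qed

lemma l_complete_up_directed_below:
  assumes "l_complete F" "\<xi>0 \<in> F" "\<xi>0 y < \<tau>"
  shows "up_directed {\<xi>\<in>F. \<xi> y < \<tau>}"
  unfolding up_directed_def
proof (intro conjI ballI)
  show "{\<xi>\<in>F. \<xi> y < \<tau>} \<noteq> {}" using assms(2,3) by blast
  fix \<xi> \<eta> assume "\<xi> \<in> {\<xi>\<in>F. \<xi> y < \<tau>}" "\<eta> \<in> {\<xi>\<in>F. \<xi> y < \<tau>}"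
  then show "\<exists>\<zeta>\<in>{\<xi>\<in>F. \<xi> y < \<tau>}. \<xi> \<le> \<zeta> \<and> \<eta> \<le> \<zeta>" using l_complete_max_min(1)[OF assms(1), of \<xi> \<eta>]
    by (intro bexI[of _ "\<lambda>z. max (\<xi> z) (\<eta> z)"]) (auto simp: le_fun_def)
qed

lemma l_complete_down_directed_above:
  assumes "l_complete F" "\<xi>0 \<in> F" "\<tau> \<le> \<xi>0 y"
  shows "down_directed {\<xi>\<in>F. \<tau> \<le> \<xi> y}"
  unfolding down_directed_def
proof (intro conjI ballI)
  show "{\<xi>\<in>F. \<tau> \<le> \<xi> y} \<noteq> {}" using assms(2,3) by blast
  fix \<xi> \<eta> assume "\<xi> \<in> {\<xi>\<in>F. \<tau> \<le> \<xi> y}" "\<eta> \<in> {\<xi>\<in>F. \<tau> \<le> \<xi> y}"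
  then show "\<exists>\<zeta>\<in>{\<xi>\<in>F. \<tau> \<le> \<xi> y}. \<zeta> \<le> \<xi> \<and> \<zeta> \<le> \<eta>" using l_complete_max_min(2)[OF assms(1), of \<xi> \<eta>]
    by (intro bexI[of _ "\<lambda>z. min (\<xi> z) (\<eta> z)"]) (auto simp: le_fun_def)
qed

text \<open>Local finiteness makes the supremum of the members below \<tau> at y attained, so it stays
  below \<tau>.\<close>

lemma l_complete_dissection_wedge_around:
  assumes F: "continuous_dissection Y F" "l_complete F" and y: "y \<in> topspace Y"
    and \<tau>: "0 < \<tau>" "\<tau> \<le> 1"
  obtains a b where "a \<in> F" "b \<in> F" "a y < \<tau>" "\<tau> \<le> b y"
    "\<forall>\<xi>\<in>F. \<xi> y < \<tau> \<longrightarrow> \<xi> \<le> a" "\<forall>\<xi>\<in>F. \<tau> \<le> \<xi> y \<longrightarrow> b \<le> \<xi>"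
proof -
  define Dl where "Dl = {\<xi>\<in>F. \<xi> y < \<tau>}"
  define Du where "Du = {\<xi>\<in>F. \<tau> \<le> \<xi> y}"
  have zero: "restrict (\<lambda>_. 0) (topspace Y) \<in> Dl"
    using continuous_dissection_zero[OF F(1)] y \<tau> unfolding Dl_def by simp
  have one: "restrict (\<lambda>_. 1) (topspace Y) \<in> Du"
    using continuous_dissection_one[OF F(1)] y \<tau> unfolding Du_def by simp
  have bdd: "bdd_above ((\<lambda>\<xi>. \<xi> z) ` Dl)" "bdd_below ((\<lambda>\<xi>. \<xi> z) ` Du)" for z
    using continuous_dissection_range[OF F(1)] unfolding Dl_def Du_def
    by (auto intro: bdd_aboveI[of _ 1] bdd_belowI[of _ 0])
  have aF: "(\<lambda>z. SUP \<xi>\<in>Dl. \<xi> z) \<in> F"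
    using l_complete_up_directed_below[OF F(2)] zero bdd(1)
    by (intro l_complete_SUP[OF F(2)]) (auto simp: Dl_def)
  have bF: "(\<lambda>z. INF \<xi>\<in>Du. \<xi> z) \<in> F"
    using l_complete_down_directed_above[OF F(2)] one bdd(2)
    by (intro l_complete_INF[OF F(2)]) (auto simp: Du_def)
  obtain \<xi>0 where "\<xi>0 \<in> Dl" "(SUP \<xi>\<in>Dl. \<xi> y) = \<xi>0 y"
    using continuous_dissection_SUP_attained[OF F(1) y, of Dl] zero unfolding Dl_def by blast
  then have "(SUP \<xi>\<in>Dl. \<xi> y) < \<tau>" unfolding Dl_def by simp
  moreover have "\<tau> \<le> (INF \<xi>\<in>Du. \<xi> y)"
    using one by (intro cINF_greatest) (auto simp: Du_def)
  moreover have "\<xi> \<le> (\<lambda>z. SUP \<xi>\<in>Dl. \<xi> z)" if "\<xi> \<in> Dl" for \<xi>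
    using that bdd(1) by (auto simp: le_fun_def intro: cSUP_upper)
  moreover have "(\<lambda>z. INF \<xi>\<in>Du. \<xi> z) \<le> \<xi>" if "\<xi> \<in> Du" for \<xi>
    using that bdd(2) by (auto simp: le_fun_def intro: cINF_lower)
  ultimately show thesis using that[OF aF bF] unfolding Dl_def Du_def by blast
qed

section \<open>Multiwedges\<close>

lemma topspace_Xle: "topspace (Xle X n) = (\<Pi>\<^sub>E i\<in>{..<n}. topspace (X i))"
  by (simp add: Xle_def)

lemma restrict_in_topspace_Xle:
  "x \<in> topspace (Xle X p) \<Longrightarrow> m \<le> p \<Longrightarrow> restrict x {..<m} \<in> topspace (Xle X m)"
  by (auto simp: topspace_Xle PiE_iff)

lemma continuous_map_restrict_Xle:
  assumes "m \<le> p"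
  shows "continuous_map (Xle X p) (Xle X m) (\<lambda>x. restrict x {..<m})"
  unfolding Xle_def continuous_map_componentwise
proof (intro conjI ballI)
  show "(\<lambda>x. restrict x {..<m}) ` topspace (product_topology X {..<p}) \<subseteq> extensional {..<m}" by auto
  fix k assume k: "k \<in> {..<m}"
  then have "continuous_map (product_topology X {..<p}) (X k) (\<lambda>x. x k)"
    using assms by (intro continuous_map_product_projection) auto
  then show "continuous_map (product_topology X {..<p}) (X k) (\<lambda>x. restrict x {..<m} k)"
    using k by simp
qed

lemma Ipow_mem: "t \<in> Ipow p \<Longrightarrow> i < p \<Longrightarrow> 0 < t i \<and> t i \<le> 1"
  by (auto simp: Ipow_def PiE_iff)

lemma ascending_lcompleteD:
  "ascending_lcomplete X p Fs \<Longrightarrow> i < p \<Longrightarrow> continuous_dissection (Xle X (Suc i)) (Fs i)"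
  "ascending_lcomplete X p Fs \<Longrightarrow> i < p \<Longrightarrow> l_complete (Fs i)"
  unfolding ascending_lcomplete_def by blast+

lemma mem_multiwedge_of:
  "(x, t) \<in> multiwedge_of X p \<xi>1 \<xi>2 \<longleftrightarrow> (x, t) \<in> dom_space X p \<and>
      (\<forall>i<p. \<xi>1 i (restrict x {..<Suc i}) < t i \<and> t i \<le> \<xi>2 i (restrict x {..<Suc i}))"
  by (simp add: multiwedge_of_def)

lemma mem_multiwedge_ofD:
  "(x, t) \<in> multiwedge_of X p \<xi>1 \<xi>2 \<Longrightarrow> i < p \<Longrightarrow>
     \<xi>1 i (restrict x {..<Suc i}) < t i \<and> t i \<le> \<xi>2 i (restrict x {..<Suc i})"
  by (simp add: multiwedge_of_def)

lemma multiwedge_of_subset_dom_space: "multiwedge_of X p \<xi>1 \<xi>2 \<subseteq> dom_space X p"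
  by (auto simp: multiwedge_of_def)

lemma is_multiwedge_subset_dom_space: "is_multiwedge X p Fs C \<Longrightarrow> C \<subseteq> dom_space X p"
  using multiwedge_of_subset_dom_space unfolding is_multiwedge_def by blast

lemma multiwedge_of_Int:
  "multiwedge_of X p \<xi>1 \<xi>2 \<inter> multiwedge_of X p \<eta>1 \<eta>2 =
   multiwedge_of X p (\<lambda>i y. max (\<xi>1 i y) (\<eta>1 i y)) (\<lambda>i y. min (\<xi>2 i y) (\<eta>2 i y))"
  by (auto simp: multiwedge_of_def)

lemma is_multiwedge_Int:
  assumes asc: "ascending_lcomplete X p Fs"
    and "is_multiwedge X p Fs C1" "is_multiwedge X p Fs C2"
  shows "is_multiwedge X p Fs (C1 \<inter> C2)"
proof -
  obtain \<xi>1 \<xi>2 where \<xi>: "\<forall>i<p. \<xi>1 i \<in> Fs i \<and> \<xi>2 i \<in> Fs i" "C1 = multiwedge_of X p \<xi>1 \<xi>2"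
    using assms(2) unfolding is_multiwedge_def by blast
  obtain \<eta>1 \<eta>2 where \<eta>: "\<forall>i<p. \<eta>1 i \<in> Fs i \<and> \<eta>2 i \<in> Fs i" "C2 = multiwedge_of X p \<eta>1 \<eta>2"
    using assms(3) unfolding is_multiwedge_def by blast
  have "\<forall>i<p. (\<lambda>y. max (\<xi>1 i y) (\<eta>1 i y)) \<in> Fs i \<and> (\<lambda>y. min (\<xi>2 i y) (\<eta>2 i y)) \<in> Fs i"
    using \<xi>(1) \<eta>(1) l_complete_max_min ascending_lcompleteD(2)[OF asc] by blast
  then show ?thesis unfolding is_multiwedge_def \<xi>(2) \<eta>(2) multiwedge_of_Int
    by (intro exI[of _ "\<lambda>i y. max (\<xi>1 i y) (\<eta>1 i y)"] exI[of _ "\<lambda>i y. min (\<xi>2 i y) (\<eta>2 i y)"]) simp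
qed

lemma minimal_multiwedge_subset:
  assumes asc: "ascending_lcomplete X p Fs" and m: "minimal_multiwedge X p Fs C'"
    and C: "is_multiwedge X p Fs C" and z: "z \<in> C'" "z \<in> C"
  shows "C' \<subseteq> C"
proof -
  have "is_multiwedge X p Fs (C' \<inter> C)"
    using is_multiwedge_Int[OF asc _ C] m unfolding minimal_multiwedge_def by blast
  moreover have "C' \<inter> C \<noteq> {}" using z by blast
  ultimately have "C' \<inter> C = C'" using m unfolding minimal_multiwedge_def by blast
  then show ?thesis by blast
qed

lemma minimal_multiwedge_eq:
  assumes asc: "ascending_lcomplete X p Fs"
    and "minimal_multiwedge X p Fs C1" "minimal_multiwedge X p Fs C2" "z \<in> C1" "z \<in> C2"
  shows "C1 = C2"
  using minimal_multiwedge_subset[OF asc] assms(2-) unfolding minimal_multiwedge_def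
  by (metis subset_antisym)

text \<open>A boundary function of a smaller multiwedge lies on the same side of the point (x, t) as
  a lower or an upper boundary, hence bounds the whole wedge.\<close>

lemma minimal_multiwedge_ofI:
  assumes ab: "\<forall>i<p. a i \<in> Fs i \<and> b i \<in> Fs i" and xt: "(x, t) \<in> multiwedge_of X p a b"
    and below: "\<And>i \<xi>. i < p \<Longrightarrow> \<xi> \<in> Fs i \<Longrightarrow> \<xi> (restrict x {..<Suc i}) < t i \<Longrightarrow> \<xi> \<le> a i"
    and above: "\<And>i \<xi>. i < p \<Longrightarrow> \<xi> \<in> Fs i \<Longrightarrow> t i \<le> \<xi> (restrict x {..<Suc i}) \<Longrightarrow> b i \<le> \<xi>"
  shows "minimal_multiwedge X p Fs (multiwedge_of X p a b)"
proof -
  let ?C = "multiwedge_of X p a b"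
  have "?C \<subseteq> C'" if C': "is_multiwedge X p Fs C'" "C' \<noteq> {}" "C' \<subseteq> ?C" for C'
  proof
    obtain \<eta>1 \<eta>2 where \<eta>: "\<forall>i<p. \<eta>1 i \<in> Fs i \<and> \<eta>2 i \<in> Fs i" "C' = multiwedge_of X p \<eta>1 \<eta>2"
      using C'(1) unfolding is_multiwedge_def by blast
    obtain y0 u0 where w0: "(y0, u0) \<in> C'" using C'(2) by fastforce
    then have w0C: "(y0, u0) \<in> ?C" using C'(3) by blast
    fix w assume wC: "w \<in> ?C"
    obtain y u where w: "w = (y, u)" by fastforce
    have "\<eta>1 i (restrict y {..<Suc i}) < u i \<and> u i \<le> \<eta>2 i (restrict y {..<Suc i})" if i: "i < p" for i
    proof -
      let ?y = "restrict y {..<Suc i}" and ?z = "restrict y0 {..<Suc i}"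
      have wi: "a i ?y < u i \<and> u i \<le> b i ?y" using mem_multiwedge_ofD[OF wC[unfolded w] i] .
      have w0i: "a i ?z < u0 i \<and> u0 i \<le> b i ?z" using mem_multiwedge_ofD[OF w0C i] .
      have w0e: "\<eta>1 i ?z < u0 i \<and> u0 i \<le> \<eta>2 i ?z" using mem_multiwedge_ofD[OF w0[unfolded \<eta>(2)] i] .
      have \<eta>F: "\<eta>1 i \<in> Fs i" "\<eta>2 i \<in> Fs i" using \<eta>(1) i by auto
      have "\<eta>1 i ?y < u i"
      proof (cases "\<eta>1 i (restrict x {..<Suc i}) < t i")
        case True
        then have "\<eta>1 i ?y \<le> a i ?y" by (rule le_funD[OF below[OF i \<eta>F(1)]])
        with wi show ?thesis by linarith
      next
        case False
        then have "b i ?z \<le> \<eta>1 i ?z" by (intro le_funD[OF above[OF i \<eta>F(1)]]) simp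
        with w0i w0e show ?thesis by linarith
      qed
      moreover have "u i \<le> \<eta>2 i ?y"
      proof (cases "t i \<le> \<eta>2 i (restrict x {..<Suc i})")
        case True
        then have "b i ?y \<le> \<eta>2 i ?y" by (rule le_funD[OF above[OF i \<eta>F(2)]])
        with wi show ?thesis by linarith
      next
        case False
        then have "\<eta>2 i ?z \<le> a i ?z" by (intro le_funD[OF below[OF i \<eta>F(2)]]) simp
        with w0i w0e show ?thesis by linarith
      qed
      ultimately show ?thesis ..
    qed
    moreover have "(y, u) \<in> dom_space X p"
      using wC multiwedge_of_subset_dom_space[of X p a b] unfolding w by blast
    ultimately show "w \<in> C'" unfolding w \<eta>(2) mem_multiwedge_of by auto
  qed
  moreover have "is_multiwedge X p Fs ?C" unfolding is_multiwedge_def using ab by blast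
  ultimately show ?thesis unfolding minimal_multiwedge_def using xt by (blast intro: subset_antisym)
qed

lemma minimal_multiwedge_through:
  assumes asc: "ascending_lcomplete X p Fs" and z: "(x, t) \<in> dom_space X p"
  obtains C where "minimal_multiwedge X p Fs C" "(x, t) \<in> C"
proof -
  have xT: "x \<in> topspace (Xle X p)" and tI: "t \<in> Ipow p" using z by (auto simp: dom_space_def)
  let ?wedge = "\<lambda>i a b. a \<in> Fs i \<and> b \<in> Fs i
     \<and> a (restrict x {..<Suc i}) < t i \<and> t i \<le> b (restrict x {..<Suc i})
     \<and> (\<forall>\<xi>\<in>Fs i. \<xi> (restrict x {..<Suc i}) < t i \<longrightarrow> \<xi> \<le> a)
     \<and> (\<forall>\<xi>\<in>Fs i. t i \<le> \<xi> (restrict x {..<Suc i}) \<longrightarrow> b \<le> \<xi>)"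
  have "\<forall>i\<in>{..<p}. \<exists>ab. ?wedge i (fst ab) (snd ab)"
  proof
    fix i assume "i \<in> {..<p}"
    then have i: "i < p" by simp
    then have xi: "restrict x {..<Suc i} \<in> topspace (Xle X (Suc i))"
      by (intro restrict_in_topspace_Xle[OF xT]) simp
    have "0 < t i" "t i \<le> 1" using Ipow_mem[OF tI i] by auto
    then obtain a b where "?wedge i a b"
      by (rule l_complete_dissection_wedge_around[OF ascending_lcompleteD[OF asc i] xi]) blast
    then show "\<exists>ab. ?wedge i (fst ab) (snd ab)" by (intro exI[of _ "(a, b)"]) simp
  qed
  then obtain ab where ab: "\<forall>i\<in>{..<p}. ?wedge i (fst (ab i)) (snd (ab i))"
    by (rule bchoice[THEN exE])
  have "(x, t) \<in> multiwedge_of X p (\<lambda>i. fst (ab i)) (\<lambda>i. snd (ab i))"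
    unfolding mem_multiwedge_of using z ab by auto
  moreover have "minimal_multiwedge X p Fs (multiwedge_of X p (\<lambda>i. fst (ab i)) (\<lambda>i. snd (ab i)))"
    by (rule minimal_multiwedge_ofI[OF _ calculation]) (use ab in auto)
  ultimately show thesis using that by blast
qed

lemma Xle_nhd_finite_restrictions:
  assumes asc: "ascending_lcomplete X p Fs" and x: "x \<in> topspace (Xle X p)"
  obtains N V where "openin (Xle X p) N" "x \<in> N" "\<forall>y\<in>N. \<forall>i<p. restrict y {..<Suc i} \<in> V i"
    "\<forall>i<p. finite ((\<lambda>\<xi>. restrict \<xi> (V i)) ` Fs i)"
proof -
  have "\<forall>i\<in>{..<p}. \<exists>V. openin (Xle X (Suc i)) V \<and> restrict x {..<Suc i} \<in> V \<and>
      finite ((\<lambda>\<xi>. restrict \<xi> V) ` Fs i)"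
  proof
    fix i assume "i \<in> {..<p}"
    then have i: "i < p" by simp
    have "restrict x {..<Suc i} \<in> topspace (Xle X (Suc i))"
      using i by (intro restrict_in_topspace_Xle[OF x]) simp
    then obtain W where "openin (Xle X (Suc i)) W" "restrict x {..<Suc i} \<in> W"
        "finite ((\<lambda>\<xi>. restrict \<xi> W) ` Fs i)"
      by (rule continuous_dissection_locally_finite[OF ascending_lcompleteD(1)[OF asc i]])
    then show "\<exists>V. openin (Xle X (Suc i)) V \<and> restrict x {..<Suc i} \<in> V \<and> finite ((\<lambda>\<xi>. restrict \<xi> V) ` Fs i)"
      by blast
  qed
  then obtain V where V: "\<forall>i\<in>{..<p}. openin (Xle X (Suc i)) (V i) \<and> restrict x {..<Suc i} \<in> V i \<and>
      finite ((\<lambda>\<xi>. restrict \<xi> (V i)) ` Fs i)"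
    by (rule bchoice[THEN exE])
  define N where "N = (\<Inter>i\<in>{..<p}. {y \<in> topspace (Xle X p). restrict y {..<Suc i} \<in> V i}) \<inter> topspace (Xle X p)"
  have "openin (Xle X p) {y \<in> topspace (Xle X p). restrict y {..<Suc i} \<in> V i}" if i: "i \<in> {..<p}" for i
  proof (rule openin_continuous_map_preimage[OF continuous_map_restrict_Xle])
    show "Suc i \<le> p" using i by simp
    show "openin (Xle X (Suc i)) (V i)" using V i by blast
  qed
  then have "openin (Xle X p) N" unfolding N_def by (intro openin_INT) simp_all
  moreover have "x \<in> N"
  proof -
    have "restrict x {..<Suc i} \<in> V i" if "i \<in> {..<p}" for i using V that by blast
    then show ?thesis unfolding N_def using x by simp
  qed
  moreover have "\<forall>y\<in>N. \<forall>i<p. restrict y {..<Suc i} \<in> V i" unfolding N_def by blast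
  moreover have "\<forall>i<p. finite ((\<lambda>\<xi>. restrict \<xi> (V i)) ` Fs i)" using V by blast
  ultimately show thesis using that by blast
qed

lemma mem_multiwedge_of_cong:
  assumes "\<And>i. i < p \<Longrightarrow> \<xi>1 i (restrict x {..<Suc i}) = \<eta>1 i (restrict x {..<Suc i}) \<and>
                             \<xi>2 i (restrict x {..<Suc i}) = \<eta>2 i (restrict x {..<Suc i})"
  shows "(x, t) \<in> multiwedge_of X p \<xi>1 \<xi>2 \<longleftrightarrow> (x, t) \<in> multiwedge_of X p \<eta>1 \<eta>2"
  using assms by (simp add: mem_multiwedge_of)

text \<open>A minimal multiwedge meeting N is determined by the restrictions of its boundary
  functions to the sets V i, and these range over a finite set.\<close>

lemma locally_finite_minimal_multiwedges:
  assumes asc: "ascending_lcomplete X p Fs" and x: "x \<in> topspace (Xle X p)"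
  obtains N where "openin (Xle X p) N" "x \<in> N"
    "finite {C. minimal_multiwedge X p Fs C \<and> fst ` C \<inter> N \<noteq> {}}"
proof -
  obtain N V where N: "openin (Xle X p) N" "x \<in> N" "\<forall>y\<in>N. \<forall>i<p. restrict y {..<Suc i} \<in> V i"
    and V: "\<forall>i<p. finite ((\<lambda>\<xi>. restrict \<xi> (V i)) ` Fs i)"
    by (rule Xle_nhd_finite_restrictions[OF asc x])
  have "finite {C. minimal_multiwedge X p Fs C \<and> fst ` C \<inter> N \<noteq> {}}" (is "finite ?S")
  proof -
    have "\<forall>C\<in>?S. \<exists>ab. (\<forall>i<p. fst ab i \<in> Fs i \<and> snd ab i \<in> Fs i) \<and> C = multiwedge_of X p (fst ab) (snd ab)"
    proof
      fix C assume "C \<in> ?S"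
      then obtain a b where "\<forall>i<p. a i \<in> Fs i \<and> b i \<in> Fs i" "C = multiwedge_of X p a b"
        unfolding minimal_multiwedge_def is_multiwedge_def by blast
      then show "\<exists>ab. (\<forall>i<p. fst ab i \<in> Fs i \<and> snd ab i \<in> Fs i) \<and> C = multiwedge_of X p (fst ab) (snd ab)"
        by (intro exI[of _ "(a, b)"]) simp
    qed
    then obtain rep where rep: "\<forall>C\<in>?S. (\<forall>i<p. fst (rep C) i \<in> Fs i \<and> snd (rep C) i \<in> Fs i)
        \<and> C = multiwedge_of X p (fst (rep C)) (snd (rep C))"
      by (rule bchoice[THEN exE])
    define key where "key C = (\<lambda>i\<in>{..<p}. (restrict (fst (rep C) i) (V i), restrict (snd (rep C) i) (V i)))" for C
    have "key ` ?S \<subseteq> (\<Pi>\<^sub>E i\<in>{..<p}. ((\<lambda>\<xi>. restrict \<xi> (V i)) ` Fs i) \<times> ((\<lambda>\<xi>. restrict \<xi> (V i)) ` Fs i))"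
    proof
      fix k assume "k \<in> key ` ?S"
      then obtain C where C: "C \<in> ?S" "k = key C" by blast
      have "fst (rep C) i \<in> Fs i" "snd (rep C) i \<in> Fs i" if "i < p" for i using rep C(1) that by auto
      then show "k \<in> (\<Pi>\<^sub>E i\<in>{..<p}. ((\<lambda>\<xi>. restrict \<xi> (V i)) ` Fs i) \<times> ((\<lambda>\<xi>. restrict \<xi> (V i)) ` Fs i))"
        unfolding C(2) key_def by (auto simp: PiE_iff)
    qed
    moreover have "finite (\<Pi>\<^sub>E i\<in>{..<p}. ((\<lambda>\<xi>. restrict \<xi> (V i)) ` Fs i) \<times> ((\<lambda>\<xi>. restrict \<xi> (V i)) ` Fs i))"
      using V by (intro finite_PiE) auto
    ultimately have "finite (key ` ?S)" by (rule finite_subset)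
    moreover have "inj_on key ?S"
    proof (rule inj_onI)
      fix C1 C2 assume C1: "C1 \<in> ?S" and C2: "C2 \<in> ?S" and k: "key C1 = key C2"
      obtain y u where yu: "(y, u) \<in> C1" "y \<in> N" using C1 by fastforce
      have "fst (rep C1) i (restrict y {..<Suc i}) = fst (rep C2) i (restrict y {..<Suc i}) \<and>
            snd (rep C1) i (restrict y {..<Suc i}) = snd (rep C2) i (restrict y {..<Suc i})" if i: "i < p" for i
      proof -
        have "restrict y {..<Suc i} \<in> V i" using N(3) yu(2) i by blast
        moreover have "key C1 i = key C2 i" using k by simp
        ultimately show ?thesis using i unfolding key_def by (auto dest: fun_cong[where x="restrict y {..<Suc i}"])
      qed
      then have "(y, u) \<in> multiwedge_of X p (fst (rep C1)) (snd (rep C1)) \<longleftrightarrow>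
                 (y, u) \<in> multiwedge_of X p (fst (rep C2)) (snd (rep C2))"
        by (rule mem_multiwedge_of_cong)
      moreover have "C1 = multiwedge_of X p (fst (rep C1)) (snd (rep C1))"
        and "C2 = multiwedge_of X p (fst (rep C2)) (snd (rep C2))"
        using rep C1 C2 by blast+
      ultimately have "(y, u) \<in> C2" using yu(1) by argo
      then show "C1 = C2" using minimal_multiwedge_eq[OF asc _ _ yu(1)] C1 C2 by blast
    qed
    ultimately show ?thesis using finite_imageD by blast
  qed
  with N(1,2) show thesis using that by blast
qed

section \<open>Small oscillation in topological groups\<close>

lemma continuous_map_diff_const:
  fixes h :: "'b \<Rightarrow> 'g::topological_group_add"
  shows "continuous_map Z euclidean h \<Longrightarrow> continuous_map Z euclidean (\<lambda>y. h y - c)"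
  by (simp add: continuous_map_atin tendsto_diff)

lemma continuous_map_const_add:
  fixes h :: "'b \<Rightarrow> 'g::topological_group_add"
  shows "continuous_map Z euclidean h \<Longrightarrow> continuous_map Z euclidean (\<lambda>y. c + h y)"
  by (simp add: continuous_map_atin tendsto_add)

lemma open_zero_nhd_diff_subset:
  fixes U :: "'g::topological_group_add set"
  assumes "open U" "0 \<in> U"
  obtains W where "open W" "0 \<in> W" "\<And>w1 w2. w1 \<in> W \<Longrightarrow> w2 \<in> W \<Longrightarrow> w1 - w2 \<in> U"
proof -
  have id: "((\<lambda>w. w) \<longlongrightarrow> ((0::'g), (0::'g))) (nhds (0, 0))" by (rule filterlim_ident)
  have "((\<lambda>w. fst w - snd w) \<longlongrightarrow> fst ((0::'g), (0::'g)) - snd ((0::'g), (0::'g))) (nhds (0, 0))"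
    by (intro tendsto_diff tendsto_fst[OF id] tendsto_snd[OF id])
  then have "eventually (\<lambda>w. fst w - snd w \<in> U) (nhds ((0::'g), (0::'g)))"
    using assms by (simp add: topological_tendstoD)
  then obtain P Q where PQ: "eventually P (nhds 0)" "eventually Q (nhds 0)" "\<And>x y. P x \<Longrightarrow> Q y \<Longrightarrow> x - y \<in> U"
    unfolding nhds_prod eventually_prod_filter by auto
  obtain S1 where "open S1" "0 \<in> S1" "\<And>x. x \<in> S1 \<Longrightarrow> P x" using PQ(1) unfolding eventually_nhds by blast
  moreover obtain S2 where "open S2" "0 \<in> S2" "\<And>x. x \<in> S2 \<Longrightarrow> Q x" using PQ(2) unfolding eventually_nhds by blast
  ultimately show thesis using that[of "S1 \<inter> S2"] PQ(3) by blast
qed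

text \<open>Only finitely many pieces come near x, and each of them either misses a neighbourhood of x
  or varies little near x.\<close>

lemma locally_finite_small_oscillation:
  fixes g :: "'j \<Rightarrow> 'b \<Rightarrow> 'g::topological_group_add"
  assumes cont: "\<And>j. j \<in> J \<Longrightarrow> continuous_map (subtopology Y (K j)) euclidean (g j)"
    and closed: "\<And>j. j \<in> J \<Longrightarrow> closedin Y (K j)"
    and N: "openin Y N" "x \<in> N" "finite {j\<in>J. K j \<inter> N \<noteq> {}}"
    and U: "open U" "0 \<in> U"
  obtains Q where "openin Y Q" "x \<in> Q" "\<forall>j\<in>J. \<forall>y\<in>Q \<inter> K j. \<forall>y'\<in>Q \<inter> K j. g j y - g j y' \<in> U"
proof -
  obtain W where W: "open W" "0 \<in> W" "\<And>w1 w2. w1 \<in> W \<Longrightarrow> w2 \<in> W \<Longrightarrow> w1 - w2 \<in> U"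
    using open_zero_nhd_diff_subset[OF U] by blast
  define S where "S = {j\<in>J. K j \<inter> N \<noteq> {}}"
  have "\<forall>j\<in>S. \<exists>V. openin Y V \<and> x \<in> V \<and> (x \<notin> K j \<longrightarrow> V \<inter> K j = {})
      \<and> (\<forall>y\<in>V \<inter> K j. g j y - g j x \<in> W)"
  proof
    fix j assume "j \<in> S"
    then have j: "j \<in> J" unfolding S_def by blast
    have xY: "x \<in> topspace Y" using N(1,2) openin_subset by blast
    show "\<exists>V. openin Y V \<and> x \<in> V \<and> (x \<notin> K j \<longrightarrow> V \<inter> K j = {}) \<and> (\<forall>y\<in>V \<inter> K j. g j y - g j x \<in> W)"
    proof (cases "x \<in> K j")
      case True
      have "openin (subtopology Y (K j)) {y \<in> topspace (subtopology Y (K j)). g j y - g j x \<in> W}"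
        using continuous_map_diff_const[OF cont[OF j]] W(1)
        by (intro openin_continuous_map_preimage) auto
      then obtain V where V: "openin Y V" "{y \<in> topspace (subtopology Y (K j)). g j y - g j x \<in> W} = V \<inter> K j"
        unfolding openin_subtopology by blast
      have "x \<in> {y \<in> topspace (subtopology Y (K j)). g j y - g j x \<in> W}" using True xY W(2) by simp
      then have "x \<in> V" using V(2) by blast
      moreover have "\<forall>y\<in>V \<inter> K j. g j y - g j x \<in> W" using V(2) by blast
      ultimately show ?thesis using V(1) True by blast
    next
      case False
      have "openin Y (topspace Y - K j)" using closed[OF j] by blast
      then show ?thesis using False xY by (intro exI[of _ "topspace Y - K j"]) auto
    qed
  qed
  then obtain V where V: "\<forall>j\<in>S. openin Y (V j) \<and> x \<in> V j \<and> (x \<notin> K j \<longrightarrow> V j \<inter> K j = {})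
      \<and> (\<forall>y\<in>V j \<inter> K j. g j y - g j x \<in> W)"
    by (rule bchoice[THEN exE])
  define Q where "Q = N \<inter> ((\<Inter>j\<in>S. V j) \<inter> topspace Y)"
  have "openin Y Q" unfolding Q_def using N(1,3) V by (intro openin_Int openin_INT) (auto simp: S_def)
  moreover have "x \<in> Q" unfolding Q_def using N(1,2) V openin_subset by blast
  moreover have "g j y - g j y' \<in> U" if j: "j \<in> J" and y: "y \<in> Q \<inter> K j" "y' \<in> Q \<inter> K j" for j y y'
  proof -
    have jS: "j \<in> S" using j y(1) unfolding S_def Q_def by blast
    then have "y \<in> V j \<inter> K j" "y' \<in> V j \<inter> K j" using y unfolding Q_def by blast+
    then have "g j y - g j x \<in> W" "g j y' - g j x \<in> W" using V jS by blast+
    then have "(g j y - g j x) - (g j y' - g j x) \<in> U" by (rule W(3))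
    then show ?thesis by (simp add: algebra_simps)
  qed
  ultimately show thesis using that by blast
qed

section \<open>Vanishing chains subordinate to an open cover\<close>

definition cutoff :: "nat \<Rightarrow> real \<Rightarrow> real" where
  "cutoff n r = max 0 (min 1 (2 - 2 * r * 2 ^ n))"

lemma cutoff_range: "0 \<le> cutoff n r \<and> cutoff n r \<le> 1"
  by (simp add: cutoff_def)

lemma cutoff_Lipschitz: "\<bar>cutoff n r - cutoff n r'\<bar> \<le> 2 * 2 ^ n * \<bar>r - r'\<bar>"
proof -
  have "(2 - 2 * r * 2 ^ n) - (2 - 2 * r' * 2 ^ n) = (2 * 2 ^ n) * (r' - r)"
    by (simp add: algebra_simps)
  then have "\<bar>(2 - 2 * r * 2 ^ n) - (2 - 2 * r' * 2 ^ n)\<bar> = 2 * 2 ^ n * \<bar>r - r'\<bar>"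
    by (simp add: abs_mult abs_minus_commute)
  then show ?thesis unfolding cutoff_def by linarith
qed

lemma cutoff_pos_imp_less: "0 < cutoff n r \<Longrightarrow> r < (1/2) ^ n"
  by (simp add: cutoff_def power_one_over field_simps)

lemma cutoff_eq_one: "0 \<le> r \<Longrightarrow> r < (1/2) ^ Suc n \<Longrightarrow> cutoff n r = 1"
  by (simp add: cutoff_def power_one_over field_simps)

definition centre_bump :: "('a \<Rightarrow> 'a \<Rightarrow> real) \<Rightarrow> 'a set \<Rightarrow> nat \<Rightarrow> 'a \<Rightarrow> real" where
  "centre_bump d C n y = (if C = {} then 0 else SUP c\<in>C. cutoff n (d y c))"

lemma SUP_le_SUP_add:
  fixes f g :: "'c \<Rightarrow> real"
  assumes "S \<noteq> {}" "bdd_above (g ` S)" "\<And>c. c \<in> S \<Longrightarrow> f c \<le> g c + K"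
  shows "(SUP c\<in>S. f c) \<le> (SUP c\<in>S. g c) + K"
proof (rule cSUP_least[OF assms(1)])
  fix c assume c: "c \<in> S"
  have "g c \<le> (SUP c\<in>S. g c)" by (rule cSUP_upper[OF c assms(2)])
  then show "f c \<le> (SUP c\<in>S. g c) + K" using assms(3)[OF c] by linarith
qed

context Metric_space
begin

lemma Lipschitz_imp_continuous_map_real:
  assumes "K \<ge> 0" and "\<And>x y. x \<in> M \<Longrightarrow> y \<in> M \<Longrightarrow> \<bar>f x - f y\<bar> \<le> K * d x y"
  shows "continuous_map mtopology euclideanreal f"
  unfolding continuous_map_from_metric
proof (intro conjI ballI allI impI)
  show "f \<in> M \<rightarrow> topspace euclideanreal" by simp
  fix a U assume a: "a \<in> M" and U: "openin euclideanreal U \<and> f a \<in> U"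
  then obtain e where e: "e > 0" "ball (f a) e \<subseteq> U"
    by (meson open_contains_ball open_openin)
  show "\<exists>r>0. \<forall>x. x \<in> M \<and> d a x < r \<longrightarrow> f x \<in> U"
  proof (intro exI[of _ "e / (K + 1)"] conjI allI impI)
    show "e / (K + 1) > 0" using e assms(1) by simp
    fix x assume x: "x \<in> M \<and> d a x < e / (K + 1)"
    have "\<bar>f a - f x\<bar> \<le> K * d a x" using assms(2) a x by blast
    also have "\<dots> \<le> (K + 1) * d a x" using nonneg[of a x] by (simp add: mult_right_mono)
    also have "\<dots> < e" using x assms(1) by (simp add: field_simps)
    finally show "f x \<in> U" using e by (auto simp: dist_real_def)
  qed
qed

lemma centre_bump_range: "0 \<le> centre_bump d C n y \<and> centre_bump d C n y \<le> 1"
proof (cases "C = {}")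
  case False
  have bdd: "bdd_above ((\<lambda>c. cutoff n (d y c)) ` C)" by (auto intro: bdd_aboveI[of _ 1] simp: cutoff_range)
  obtain c where c: "c \<in> C" using False by blast
  have "0 \<le> cutoff n (d y c)" by (simp add: cutoff_range)
  also have "\<dots> \<le> (SUP c\<in>C. cutoff n (d y c))" by (rule cSUP_upper[OF c bdd])
  finally show ?thesis
    using False by (simp add: centre_bump_def cSUP_least cutoff_range)
qed (simp add: centre_bump_def)

lemma centre_bump_continuous:
  assumes "C \<subseteq> M"
  shows "continuous_map mtopology euclideanreal (centre_bump d C n)"
proof (rule Lipschitz_imp_continuous_map_real[of "2 * 2 ^ n"])
  have half: "centre_bump d C n x - centre_bump d C n y \<le> 2 * 2 ^ n * d x y"
    if "x \<in> M" "y \<in> M" for x y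
  proof (cases "C = {}")
    case False
    have "(SUP c\<in>C. cutoff n (d x c)) \<le> (SUP c\<in>C. cutoff n (d y c)) + 2 * 2 ^ n * d x y"
    proof (rule SUP_le_SUP_add[OF False])
      show "bdd_above ((\<lambda>c. cutoff n (d y c)) ` C)" by (auto intro: bdd_aboveI[of _ 1] simp: cutoff_range)
      fix c assume "c \<in> C"
      then have "\<bar>d x c - d y c\<bar> \<le> d x y"
        using assms that triangle commute by (smt (verit) subsetD)
      then have "\<bar>cutoff n (d x c) - cutoff n (d y c)\<bar> \<le> 2 * 2 ^ n * d x y"
        using cutoff_Lipschitz[of n "d x c" "d y c"] by (smt (verit) mult_left_mono zero_le_power)
      then show "cutoff n (d x c) \<le> cutoff n (d y c) + 2 * 2 ^ n * d x y" by linarith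
    qed
    then show ?thesis using False by (simp add: centre_bump_def)
  qed (simp add: centre_bump_def)
  fix x y assume "x \<in> M" "y \<in> M"
  then show "\<bar>centre_bump d C n x - centre_bump d C n y\<bar> \<le> 2 * 2 ^ n * d x y"
    using half[of x y] half[of y x] commute[of x y] by (simp add: abs_le_iff)
qed simp

lemma centre_bump_eq_one:
  assumes "c \<in> C" "y \<in> M" "c \<in> M" "d y c < (1/2) ^ Suc n"
  shows "centre_bump d C n y = 1"
proof -
  have "cutoff n (d y c) = 1" using assms by (intro cutoff_eq_one) auto
  moreover have "cutoff n (d y c) \<le> centre_bump d C n y"
    using assms(1) unfolding centre_bump_def
    by (auto intro!: cSUP_upper bdd_aboveI[of _ 1] simp: cutoff_range)
  ultimately show ?thesis using centre_bump_range[of C n y] by linarith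
qed

lemma centre_bump_pos_imp_near:
  assumes "0 < centre_bump d C n y"
  obtains c where "c \<in> C" "d y c < (1/2) ^ n"
proof -
  have ne: "C \<noteq> {}" and "0 < (SUP c\<in>C. cutoff n (d y c))"
    using assms by (auto simp: centre_bump_def split: if_splits)
  then obtain c where "c \<in> C" "0 < cutoff n (d y c)"
    by (subst (asm) less_cSUP_iff) (auto intro: bdd_aboveI[of _ 1] simp: cutoff_range)
  then show thesis using that cutoff_pos_imp_less by blast
qed

text \<open>Well-order the cover. A point is a centre of level n if its ball of radius 5 * 2^-n lies in
  a member of the cover, and its index is the first such member; close centres of the same level
  have the same index because each of their balls contains the other centre.\<close>

lemma indexed_centres:
  assumes cover: "\<And>x. x \<in> M \<Longrightarrow> openin mtopology (Oc x) \<and> x \<in> Oc x"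
  obtains Cn :: "nat \<Rightarrow> 'a set" and idx :: "'a \<Rightarrow> 'a" where
    "\<And>n. Cn n \<subseteq> M"
    "\<And>y. y \<in> M \<Longrightarrow> \<exists>n. y \<in> Cn n"
    "\<And>n c. c \<in> Cn n \<Longrightarrow> idx c \<in> M"
    "\<And>n c y. c \<in> Cn n \<Longrightarrow> y \<in> M \<Longrightarrow> d c y < 5 * (1/2) ^ n \<Longrightarrow> y \<in> Oc (idx c)"
    "\<And>n c c'. c \<in> Cn n \<Longrightarrow> c' \<in> Cn n \<Longrightarrow> d c c' < 5 * (1/2) ^ n \<Longrightarrow> idx c = idx c'"
proof -
  obtain r :: "'a rel" where r: "well_order_on M r" using well_order_on by blast
  have wf: "wf (r - Id)" using r by (simp add: well_order_on_def)
  have total: "total_on M r" using r by (simp add: well_order_on_def linear_order_on_def)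
  have "\<forall>y\<in>M. \<exists>\<alpha>. \<alpha> \<in> M \<and> y \<in> Oc \<alpha> \<and> (\<forall>\<beta>\<in>M. y \<in> Oc \<beta> \<longrightarrow> (\<beta>, \<alpha>) \<notin> r - Id)"
  proof
    fix y assume "y \<in> M"
    then have "y \<in> {\<alpha>\<in>M. y \<in> Oc \<alpha>}" using cover by auto
    then show "\<exists>\<alpha>. \<alpha> \<in> M \<and> y \<in> Oc \<alpha> \<and> (\<forall>\<beta>\<in>M. y \<in> Oc \<beta> \<longrightarrow> (\<beta>, \<alpha>) \<notin> r - Id)"
      by (rule wfE_min[OF wf]) blast
  qed
  then obtain idx where idx0: "\<forall>y\<in>M. idx y \<in> M \<and> y \<in> Oc (idx y) \<and>
      (\<forall>\<beta>\<in>M. y \<in> Oc \<beta> \<longrightarrow> (\<beta>, idx y) \<notin> r - Id)"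
    by (rule bchoice[THEN exE])
  have idx: "idx y \<in> M" "y \<in> Oc (idx y)" "\<And>\<beta>. \<beta> \<in> M \<Longrightarrow> y \<in> Oc \<beta> \<Longrightarrow> (\<beta>, idx y) \<notin> r - Id"
    if "y \<in> M" for y
    using idx0 that by blast+
  define Cn where "Cn n = {c\<in>M. \<forall>y\<in>M. d c y < 5 * (1/2) ^ n \<longrightarrow> y \<in> Oc (idx c)}" for n :: nat
  show thesis
  proof (rule that[of Cn idx])
    fix y assume y: "y \<in> M"
    obtain e where e: "e > 0" "mball y e \<subseteq> Oc (idx y)"
      using cover idx[OF y] by (meson openin_mtopology)
    obtain n where "(1/2::real) ^ n < e / 5" using real_arch_pow_inv[of "e / 5" "1/2"] e by auto
    then have "y \<in> Cn n" unfolding Cn_def using y e by (auto simp: subset_iff)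
    then show "\<exists>n. y \<in> Cn n" by blast
  next
    fix n c c' assume c: "c \<in> Cn n" and c': "c' \<in> Cn n" and dcc: "d c c' < 5 * (1/2) ^ n"
    have cM: "c \<in> M" and c'M: "c' \<in> M" using c c' unfolding Cn_def by auto
    have "c' \<in> Oc (idx c)" "c \<in> Oc (idx c')"
      using c c' cM c'M dcc commute[of c c'] unfolding Cn_def by auto
    then have "(idx c, idx c') \<notin> r - Id" "(idx c', idx c) \<notin> r - Id"
      using idx(1,3) cM c'M by blast+
    moreover have "idx c = idx c' \<or> (idx c, idx c') \<in> r \<or> (idx c', idx c) \<in> r"
      using total idx(1) cM c'M unfolding total_on_def by blast
    ultimately show "idx c = idx c'" by auto
  qed (auto simp: Cn_def idx)
qed

lemma vanishing_chain_near_centres: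
  assumes CnM: "\<And>n. Cn n \<subseteq> M" and cov: "\<And>y. y \<in> M \<Longrightarrow> \<exists>n. y \<in> Cn n"
  obtains \<mu> :: "nat \<Rightarrow> 'a \<Rightarrow> real" where
    "\<And>n. continuous_map mtopology (subtopology euclideanreal {0..1}) (\<mu> n)"
    "\<And>n y. y \<notin> M \<Longrightarrow> \<mu> n y = 0"
    "\<And>y. y \<in> M \<Longrightarrow> \<mu> 0 y = 1"
    "\<And>n y. \<mu> (Suc n) y \<le> \<mu> n y"
    "\<And>y. y \<in> M \<Longrightarrow> \<exists>V n. openin mtopology V \<and> y \<in> V \<and> (\<forall>m\<ge>n. \<forall>y'\<in>V. \<mu> m y' = 0)"
    "\<And>n y. y \<in> M \<Longrightarrow> \<mu> (Suc n) y < \<mu> n y \<Longrightarrow> \<exists>c\<in>Cn n. d y c < (1/2) ^ n"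
proof -
  define \<psi> where "\<psi> n = centre_bump d (Cn n) n" for n
  define \<mu> where "\<mu> n y = (if y \<in> M then max 0 (1 - (\<Sum>m<n. \<psi> m y)) else 0)" for n y
  have \<psi>: "0 \<le> \<psi> n y \<and> \<psi> n y \<le> 1" for n y unfolding \<psi>_def by (rule centre_bump_range)
  show thesis
  proof (rule that[of \<mu>])
    fix n
    have "continuous_map mtopology euclideanreal (\<lambda>y. max 0 (1 - (\<Sum>m<n. \<psi> m y)))"
      unfolding \<psi>_def by (intro continuous_intros centre_bump_continuous CnM) auto
    then have "continuous_map mtopology euclideanreal (\<mu> n)"
      by (rule continuous_map_eq) (simp add: \<mu>_def)
    moreover have "0 \<le> \<mu> n y \<and> \<mu> n y \<le> 1" for y
      using sum_nonneg[of "{..<n}" "\<lambda>m. \<psi> m y"] \<psi> by (simp add: \<mu>_def)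
    ultimately show "continuous_map mtopology (subtopology euclideanreal {0..1}) (\<mu> n)"
      by (simp add: continuous_map_in_subtopology image_subset_iff)
  next
    fix n y show "\<mu> (Suc n) y \<le> \<mu> n y" using \<psi>[of n y] by (auto simp: \<mu>_def)
  next
    fix y assume y: "y \<in> M"
    obtain n where n: "y \<in> Cn n" using cov y by blast
    have "\<mu> m y' = 0" if "Suc n \<le> m" "y' \<in> mball y ((1/2) ^ Suc n)" for m y'
    proof -
      have "1 = \<psi> n y'" unfolding \<psi>_def
        using that(2) n CnM by (intro centre_bump_eq_one[symmetric]) (auto simp: commute)
      also have "\<dots> \<le> (\<Sum>k<m. \<psi> k y')" by (rule member_le_sum) (use that(1) \<psi> in auto)
      finally show ?thesis by (simp add: \<mu>_def)
    qed
    then show "\<exists>V n. openin mtopology V \<and> y \<in> V \<and> (\<forall>m\<ge>n. \<forall>y'\<in>V. \<mu> m y' = 0)"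
      using y by (intro exI[of _ "mball y ((1/2) ^ Suc n)"] exI[of _ "Suc n"]) auto
  next
    fix n y assume "y \<in> M" and "\<mu> (Suc n) y < \<mu> n y"
    then have "0 < \<psi> n y" using \<psi>[of n y] by (auto simp: \<mu>_def)
    then show "\<exists>c\<in>Cn n. d y c < (1/2) ^ n"
      unfolding \<psi>_def by (elim centre_bump_pos_imp_near) blast
  qed (auto simp: \<mu>_def)
qed

text \<open>The label of a point of W n is the index of a nearby centre of level n.\<close>

lemma centre_labels_locally_constant:
  assumes Cn: "\<And>n. Cn n \<subseteq> M"
    and idx: "\<And>n c. c \<in> Cn n \<Longrightarrow> idx c \<in> M"
      "\<And>n c y. c \<in> Cn n \<Longrightarrow> y \<in> M \<Longrightarrow> d c y < 5 * (1/2) ^ n \<Longrightarrow> y \<in> Oc (idx c)"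
      "\<And>n c c'. c \<in> Cn n \<Longrightarrow> c' \<in> Cn n \<Longrightarrow> d c c' < 5 * (1/2) ^ n \<Longrightarrow> idx c = idx c'"
    and W: "W = (\<lambda>n. {y\<in>M. \<exists>c\<in>Cn n. d y c < 2 * (1/2) ^ n})"
  obtains \<alpha> where "\<forall>n. \<forall>y\<in>W n. \<alpha> n y \<in> M \<and> y \<in> Oc (\<alpha> n y)"
    "\<forall>n. \<forall>y\<in>W n. \<exists>V. openin mtopology V \<and> y \<in> V \<and> (\<forall>y'\<in>V \<inter> W n. \<alpha> n y' = \<alpha> n y)"
proof -
  define e where "e n = (1/2::real) ^ n" for n
  have e: "0 < e n" for n by (simp add: e_def)
  define cen where "cen n y = (SOME c. c \<in> Cn n \<and> d y c < 2 * e n)" for n y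
  define \<alpha> where "\<alpha> n y = idx (cen n y)" for n y
  have cen: "cen n y \<in> Cn n" "d y (cen n y) < 2 * e n" if "y \<in> W n" for n y
    using someI_ex[of "\<lambda>c. c \<in> Cn n \<and> d y c < 2 * e n"] that unfolding W e_def cen_def by auto
  have "\<alpha> n y \<in> M \<and> y \<in> Oc (\<alpha> n y)" if y: "y \<in> W n" for n y
  proof -
    have "d (cen n y) y < 5 * (1/2) ^ n"
      using cen(2)[OF y] e[of n] commute[of "cen n y" y] unfolding e_def by linarith
    then show ?thesis unfolding \<alpha>_def using idx(1,2) cen(1)[OF y] y unfolding W by blast
  qed
  moreover have "\<exists>V. openin mtopology V \<and> y \<in> V \<and> (\<forall>y'\<in>V \<inter> W n. \<alpha> n y' = \<alpha> n y)"
    if y: "y \<in> W n" for n y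
  proof -
    have "\<alpha> n y' = \<alpha> n y" if y': "y' \<in> mball y (e n / 2) \<inter> W n" for y'
    proof -
      have M: "y \<in> M" "y' \<in> M" "cen n y \<in> M" "cen n y' \<in> M"
        using y y' cen(1) Cn unfolding W by blast+
      have "d (cen n y') (cen n y) \<le> d (cen n y') y' + d y' y + d y (cen n y)"
        using M triangle by (smt (verit))
      also have "\<dots> < 5 * (1/2) ^ n"
      proof -
        have "d y' y < e n / 2" using y' commute[of y' y] by simp
        moreover have "d (cen n y') y' < 2 * e n" using cen(2)[of y' n] y' commute[of "cen n y'" y'] by simp
        ultimately show ?thesis using cen(2)[OF y] e[of n] unfolding e_def by linarith
      qed
      finally show ?thesis unfolding \<alpha>_def using idx(3) cen(1) y y' by blast
    qed
    moreover have "y \<in> mball y (e n / 2)" using y e[of n] unfolding W by simp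
    ultimately show ?thesis by (meson openin_mball)
  qed
  ultimately show thesis using that by blast
qed

lemma subordinate_vanishing_chain:
  assumes Oc: "\<And>x. x \<in> M \<Longrightarrow> openin mtopology (Oc x) \<and> x \<in> Oc x"
  obtains \<mu> :: "nat \<Rightarrow> 'a \<Rightarrow> real" and W :: "nat \<Rightarrow> 'a set" and \<alpha> :: "nat \<Rightarrow> 'a \<Rightarrow> 'a" where
    "\<And>n. continuous_map mtopology (subtopology euclideanreal {0..1}) (\<mu> n)"
    "\<And>n y. y \<notin> M \<Longrightarrow> \<mu> n y = 0"
    "\<And>y. y \<in> M \<Longrightarrow> \<mu> 0 y = 1"
    "\<And>n y. \<mu> (Suc n) y \<le> \<mu> n y"
    "\<And>y. y \<in> M \<Longrightarrow> \<exists>V n. openin mtopology V \<and> y \<in> V \<and> (\<forall>m\<ge>n. \<forall>y'\<in>V. \<mu> m y' = 0)"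
    "\<And>n. mtopology closure_of {y. \<mu> (Suc n) y < \<mu> n y} \<subseteq> W n"
    "\<And>n y. y \<in> W n \<Longrightarrow> \<alpha> n y \<in> M \<and> y \<in> Oc (\<alpha> n y)"
    "\<And>n y. y \<in> W n \<Longrightarrow> \<exists>V. openin mtopology V \<and> y \<in> V \<and> (\<forall>y'\<in>V \<inter> W n. \<alpha> n y' = \<alpha> n y)"
proof -
  obtain Cn idx where Cn: "\<And>n. Cn n \<subseteq> M" "\<And>y. y \<in> M \<Longrightarrow> \<exists>n. y \<in> Cn n"
    and idx: "\<And>n c. c \<in> Cn n \<Longrightarrow> idx c \<in> M"
      "\<And>n c y. c \<in> Cn n \<Longrightarrow> y \<in> M \<Longrightarrow> d c y < 5 * (1/2) ^ n \<Longrightarrow> y \<in> Oc (idx c)"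
      "\<And>n c c'. c \<in> Cn n \<Longrightarrow> c' \<in> Cn n \<Longrightarrow> d c c' < 5 * (1/2) ^ n \<Longrightarrow> idx c = idx c'"
    using indexed_centres[OF Oc] by blast
  obtain \<mu> where \<mu>: "\<And>n. continuous_map mtopology (subtopology euclideanreal {0..1}) (\<mu> n)"
    "\<And>n y. y \<notin> M \<Longrightarrow> \<mu> n y = 0" "\<And>y. y \<in> M \<Longrightarrow> \<mu> 0 y = 1" "\<And>n y. \<mu> (Suc n) y \<le> \<mu> n y"
    "\<And>y. y \<in> M \<Longrightarrow> \<exists>V n. openin mtopology V \<and> y \<in> V \<and> (\<forall>m\<ge>n. \<forall>y'\<in>V. \<mu> m y' = 0)"
    and near: "\<And>n y. y \<in> M \<Longrightarrow> \<mu> (Suc n) y < \<mu> n y \<Longrightarrow> \<exists>c\<in>Cn n. d y c < (1/2) ^ n"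
    using vanishing_chain_near_centres[OF Cn] by blast
  define W where "W = (\<lambda>n. {y\<in>M. \<exists>c\<in>Cn n. d y c < 2 * (1/2) ^ n})"
  obtain \<alpha> where \<alpha>: "\<forall>n. \<forall>y\<in>W n. \<alpha> n y \<in> M \<and> y \<in> Oc (\<alpha> n y)"
    "\<forall>n. \<forall>y\<in>W n. \<exists>V. openin mtopology V \<and> y \<in> V \<and> (\<forall>y'\<in>V \<inter> W n. \<alpha> n y' = \<alpha> n y)"
    by (rule centre_labels_locally_constant[where Oc=Oc and idx=idx, OF Cn(1) idx W_def])
  have "mtopology closure_of {y. \<mu> (Suc n) y < \<mu> n y} \<subseteq> W n" for n
  proof
    fix y assume y: "y \<in> mtopology closure_of {y. \<mu> (Suc n) y < \<mu> n y}"
    then have yM: "y \<in> M" using closure_of_subset_topspace by fastforce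
    have "openin mtopology (mball y ((1/2) ^ n))" "y \<in> mball y ((1/2) ^ n)" using yM by auto
    then obtain y1 where y1: "\<mu> (Suc n) y1 < \<mu> n y1" "y1 \<in> mball y ((1/2) ^ n)"
      using y unfolding in_closure_of by blast
    then have "y1 \<in> M" by simp
    then obtain c where "c \<in> Cn n" "d y1 c < (1/2) ^ n" using near y1(1) by blast
    moreover have "d y c \<le> d y y1 + d y1 c" using Cn(1) calculation(1) yM \<open>y1 \<in> M\<close> by (meson subsetD triangle)
    ultimately show "y \<in> W n" unfolding W_def using yM y1(2) by force
  qed
  then show thesis using that[OF \<mu>] \<alpha> by blast
qed

end

lemma metrizable_subordinate_vanishing_chain:
  assumes "metrizable_space Y"
    and cover: "\<And>x. x \<in> topspace Y \<Longrightarrow> openin Y (Oc x) \<and> x \<in> Oc x"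
  obtains \<mu> :: "nat \<Rightarrow> 'a \<Rightarrow> real" and W :: "nat \<Rightarrow> 'a set" and \<alpha> :: "nat \<Rightarrow> 'a \<Rightarrow> 'a" where
    "\<And>n. continuous_map Y (subtopology euclideanreal {0..1}) (\<mu> n)"
    "\<And>n y. y \<notin> topspace Y \<Longrightarrow> \<mu> n y = 0"
    "\<And>y. y \<in> topspace Y \<Longrightarrow> \<mu> 0 y = 1"
    "\<And>n y. \<mu> (Suc n) y \<le> \<mu> n y"
    "\<And>y. y \<in> topspace Y \<Longrightarrow> \<exists>V n. openin Y V \<and> y \<in> V \<and> (\<forall>m\<ge>n. \<forall>y'\<in>V. \<mu> m y' = 0)"
    "\<And>n. Y closure_of {y. \<mu> (Suc n) y < \<mu> n y} \<subseteq> W n"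
    "\<And>n y. y \<in> W n \<Longrightarrow> \<alpha> n y \<in> topspace Y \<and> y \<in> Oc (\<alpha> n y)"
    "\<And>n y. y \<in> W n \<Longrightarrow> \<exists>V. openin Y V \<and> y \<in> V \<and> (\<forall>y'\<in>V \<inter> W n. \<alpha> n y' = \<alpha> n y)"
proof -
  obtain M d where Md: "Metric_space M d" "Y = Metric_space.mtopology M d"
    using assms(1) unfolding metrizable_space_def by blast
  interpret Metric_space M d by (rule Md(1))
  show thesis
    using subordinate_vanishing_chain[of Oc] cover that unfolding Md(2) by auto
qed

section \<open>Lifting through a local section\<close>

lemma continuous_map_translated_section:
  fixes g :: "'b \<Rightarrow> 'q::{ab_group_add, topological_group_add}" and s :: "'q \<Rightarrow> 'a::topological_group_add"
  assumes g: "continuous_map (subtopology Y S) euclidean g" and U: "\<And>y. y \<in> topspace (subtopology Y S) \<Longrightarrow> g y - c \<in> U"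
    and s: "continuous_on U s"
  shows "continuous_map (subtopology Y S) euclidean (\<lambda>y. a + s (g y - c))"
proof -
  have "continuous_map (subtopology Y S) (subtopology euclidean U) (\<lambda>y. g y - c)"
    using continuous_map_diff_const[OF g] U by (simp add: continuous_map_in_subtopology image_subset_iff)
  moreover have "continuous_map (subtopology euclidean U) euclidean s" using s by simp
  ultimately have "continuous_map (subtopology Y S) euclidean (s \<circ> (\<lambda>y. g y - c))"
    by (rule continuous_map_compose)
  then show ?thesis unfolding o_def by (rule continuous_map_const_add)
qed

text \<open>On the points labelled \<beta>, the lift is a + s (g y - g b) for a base point b in Oc \<beta> \<inter> K
  and a preimage a of g b; as the labels are locally constant, these local lifts paste.\<close>

lemma continuous_lift_through_local_section:
  fixes g :: "'b \<Rightarrow> 'q::{ab_group_add, topological_group_add}"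
    and \<pi> :: "'a::{ab_group_add, topological_group_add} \<Rightarrow> 'q" and s :: "'q \<Rightarrow> 'a"
  assumes g: "continuous_map (subtopology Y K) euclidean g"
    and label: "\<And>y. y \<in> K \<inter> W \<Longrightarrow> y \<in> Oc (\<alpha> y)"
    and label_locally_constant:
      "\<And>y. y \<in> K \<inter> W \<Longrightarrow> \<exists>V. openin Y V \<and> y \<in> V \<and> (\<forall>y'\<in>V \<inter> K \<inter> W. \<alpha> y' = \<alpha> y)"
    and small_oscillation:
      "\<And>z y y'. z \<in> K \<inter> W \<Longrightarrow> y \<in> Oc (\<alpha> z) \<inter> K \<Longrightarrow> y' \<in> Oc (\<alpha> z) \<inter> K \<Longrightarrow> g y - g y' \<in> U"
    and sect: "continuous_on U s" "\<And>u. u \<in> U \<Longrightarrow> \<pi> (s u) = u"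
    and \<pi>_add: "\<And>u v. \<pi> (u + v) = \<pi> u + \<pi> v" and \<pi>_surj: "\<And>q. \<exists>a. \<pi> a = q"
  obtains h where "continuous_map (subtopology Y (K \<inter> W)) euclidean h" "\<forall>y\<in>K \<inter> W. \<pi> (h y) = g y"
proof -
  define b where "b \<beta> = (SOME b. b \<in> Oc \<beta> \<inter> K)" for \<beta>
  define a where "a \<beta> = (SOME a. \<pi> a = g (b \<beta>))" for \<beta>
  define lift where "lift z y = a (\<alpha> z) + s (g y - g (b (\<alpha> z)))" for z y
  have b: "b (\<alpha> z) \<in> Oc (\<alpha> z) \<inter> K" if "z \<in> K \<inter> W" for z
    using someI[of "\<lambda>b. b \<in> Oc (\<alpha> z) \<inter> K" z] label[OF that] that unfolding b_def by blast
  have a: "\<pi> (a \<beta>) = g (b \<beta>)" for \<beta>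
    using someI_ex[OF \<pi>_surj] unfolding a_def by blast
  have inU: "g y - g (b (\<alpha> z)) \<in> U" if "z \<in> K \<inter> W" "y \<in> Oc (\<alpha> z) \<inter> K" for z y
    using small_oscillation[OF that(1) that(2) b[OF that(1)]] .
  have "\<forall>z\<in>K \<inter> W. \<exists>V. openin Y V \<and> z \<in> V \<and> (\<forall>y\<in>V \<inter> K \<inter> W. \<alpha> y = \<alpha> z)"
    using label_locally_constant by blast
  then obtain V where V: "\<forall>z\<in>K \<inter> W. openin Y (V z) \<and> z \<in> V z \<and> (\<forall>y\<in>V z \<inter> K \<inter> W. \<alpha> y = \<alpha> z)"
    by (rule bchoice[THEN exE])
  have "continuous_map (subtopology Y (K \<inter> W)) euclidean (\<lambda>y. lift y y)"
  proof (rule pasting_lemma[where I="K \<inter> W" and T="\<lambda>z. K \<inter> W \<inter> V z" and f=lift])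
    fix z assume z: "z \<in> K \<inter> W"
    show "openin (subtopology Y (K \<inter> W)) (K \<inter> W \<inter> V z)"
      using V z by (intro openin_subtopology_Int2) blast
    have sub: "subtopology (subtopology Y (K \<inter> W)) (K \<inter> W \<inter> V z) = subtopology Y (K \<inter> W \<inter> V z)"
      by (simp add: subtopology_subtopology Int_absorb1)
    have "continuous_map (subtopology Y (K \<inter> W \<inter> V z)) euclidean g"
      by (rule continuous_map_from_subtopology_mono[OF g]) blast
    moreover have "g y - g (b (\<alpha> z)) \<in> U" if "y \<in> topspace (subtopology Y (K \<inter> W \<inter> V z))" for y
    proof -
      have y: "y \<in> K \<inter> W" "y \<in> V z" using that by auto
      then have "\<alpha> y = \<alpha> z" using V z by blast
      then have "y \<in> Oc (\<alpha> z) \<inter> K" using label[OF y(1)] y(1) by simp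
      then show ?thesis by (rule inU[OF z])
    qed
    ultimately show "continuous_map (subtopology (subtopology Y (K \<inter> W)) (K \<inter> W \<inter> V z)) euclidean (lift z)"
      unfolding sub lift_def using sect(1) by (rule continuous_map_translated_section)
  next
    fix i j y assume ij: "i \<in> K \<inter> W" "j \<in> K \<inter> W"
      and y: "y \<in> topspace (subtopology Y (K \<inter> W)) \<inter> (K \<inter> W \<inter> V i) \<inter> (K \<inter> W \<inter> V j)"
    have "\<alpha> y = \<alpha> i" using V ij(1) y by blast
    moreover have "\<alpha> y = \<alpha> j" using V ij(2) y by blast
    ultimately have "\<alpha> i = \<alpha> j" by simp
    then show "lift i y = lift j y" by (simp add: lift_def)
  next
    fix y assume "y \<in> topspace (subtopology Y (K \<inter> W))"
    then have "y \<in> K \<inter> W" by simp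
    then show "\<exists>j. j \<in> K \<inter> W \<and> y \<in> K \<inter> W \<inter> V j \<and> lift y y = lift j y" using V by blast
  qed
  moreover have "\<pi> (lift y y) = g y" if "y \<in> K \<inter> W" for y
    using that inU[of y y] label[OF that] sect(2) a by (simp add: lift_def \<pi>_add)
  ultimately show thesis using that by blast
qed

section \<open>Refining the controlling tuple\<close>

lemma ex1_layer_of_decreasing:
  fixes f :: "nat \<Rightarrow> real"
  assumes dec: "\<And>n. f (Suc n) \<le> f n" and top: "t \<le> f 0" and bottom: "f N < t"
  shows "\<exists>!n. f (Suc n) < t \<and> t \<le> f n"
proof -
  have anti: "f m \<le> f n" if "n \<le> m" for n m
    using that by (induction m rule: dec_induct) (auto intro: order_trans[OF dec])
  define m where "m = (LEAST m. f m < t)"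
  have "f m < t" unfolding m_def by (rule LeastI[of _ N]) (rule bottom)
  moreover have "m \<noteq> 0" using calculation top by (metis not_less)
  moreover have "\<not> f (m - 1) < t" unfolding m_def by (rule not_less_Least) (use calculation in \<open>simp add: m_def\<close>)
  ultimately have "f (Suc (m - 1)) < t \<and> t \<le> f (m - 1)" by simp
  moreover have "k = l" if "f (Suc k) < t \<and> t \<le> f k" "f (Suc l) < t \<and> t \<le> f l" for k l
    using that anti[of "Suc k" l] anti[of "Suc l" k] by (cases k l rule: linorder_cases) auto
  ultimately show ?thesis by blast
qed

lemma ascending_lcomplete_extend_last:
  fixes \<mu> :: "nat \<Rightarrow> (nat \<Rightarrow> 'a) \<Rightarrow> real"
  assumes asc: "ascending_lcomplete X p Fs" and p: "0 < p"
    and cont: "\<And>n. continuous_map (Xle X p) (subtopology euclideanreal {0..1}) (\<mu> n)"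
    and outside: "\<And>n x. x \<notin> topspace (Xle X p) \<Longrightarrow> \<mu> n x = 0"
    and vanish: "\<And>x. x \<in> topspace (Xle X p) \<Longrightarrow>
       \<exists>V n. openin (Xle X p) V \<and> x \<in> V \<and> (\<forall>m\<ge>n. \<forall>x'\<in>V. \<mu> m x' = 0)"
  obtains Fs' where "ascending_lcomplete X p Fs'" "\<And>i. i < p \<Longrightarrow> Fs i \<subseteq> Fs' i" "\<And>n. \<mu> n \<in> Fs' (p - 1)"
proof -
  have "continuous_dissection (Xle X p) (Fs (p - 1))"
    using ascending_lcompleteD(1)[OF asc, of "p - 1"] p by simp
  then have "continuous_dissection (Xle X p) (Fs (p - 1) \<union> range \<mu>)"
    using cont outside vanish by (rule continuous_dissection_Un_eventually_vanishing)
  then obtain L where L: "continuous_dissection (Xle X p) L" "l_complete L" "Fs (p - 1) \<union> range \<mu> \<subseteq> L"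
    by (rule continuous_dissection_l_complete_hull)
  define Fs' where "Fs' = Fs((p - 1) := L)"
  have "ascending_lcomplete X p Fs'"
    using asc L p unfolding ascending_lcomplete_def Fs'_def by auto
  moreover have "Fs i \<subseteq> Fs' i" if "i < p" for i using L(3) unfolding Fs'_def by auto
  moreover have "\<mu> n \<in> Fs' (p - 1)" for n using L(3) unfolding Fs'_def by auto
  ultimately show thesis using that by blast
qed

text \<open>The levels below the last one use the constant boundaries 0 and 1.\<close>

lemma is_multiwedge_last_coordinate:
  assumes asc: "ascending_lcomplete X p Fs" and p: "0 < p"
    and \<xi>: "\<xi>1 \<in> Fs (p - 1)" "\<xi>2 \<in> Fs (p - 1)"
  shows "is_multiwedge X p Fs {(x, t) \<in> dom_space X p. \<xi>1 x < t (p - 1) \<and> t (p - 1) \<le> \<xi>2 x}"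
proof -
  define lo where "lo i = (if i = p - 1 then \<xi>1 else restrict (\<lambda>_. 0) (topspace (Xle X (Suc i))))" for i
  define hi where "hi i = (if i = p - 1 then \<xi>2 else restrict (\<lambda>_. 1) (topspace (Xle X (Suc i))))" for i
  have "\<forall>i<p. lo i \<in> Fs i \<and> hi i \<in> Fs i"
    using \<xi> continuous_dissection_zero[OF ascending_lcompleteD(1)[OF asc]]
      continuous_dissection_one[OF ascending_lcompleteD(1)[OF asc]]
    by (simp add: lo_def hi_def)
  moreover have "multiwedge_of X p lo hi = {(x, t) \<in> dom_space X p. \<xi>1 x < t (p - 1) \<and> t (p - 1) \<le> \<xi>2 x}"
  proof (intro set_eqI iffI)
    fix z assume z: "z \<in> multiwedge_of X p lo hi"
    obtain x t where xt: "z = (x, t)" by fastforce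
    have dom: "(x, t) \<in> dom_space X p" using z xt multiwedge_of_subset_dom_space by blast
    then have "restrict x {..<Suc (p - 1)} = x"
      using p by (auto simp: dom_space_def topspace_Xle PiE_def extensional_restrict)
    then show "z \<in> {(x, t) \<in> dom_space X p. \<xi>1 x < t (p - 1) \<and> t (p - 1) \<le> \<xi>2 x}"
      using mem_multiwedge_ofD[OF z[unfolded xt], of "p - 1"] dom p xt by (simp add: lo_def hi_def)
  next
    fix z assume z: "z \<in> {(x, t) \<in> dom_space X p. \<xi>1 x < t (p - 1) \<and> t (p - 1) \<le> \<xi>2 x}"
    obtain x t where xt: "z = (x, t)" by fastforce
    have dom: "(x, t) \<in> dom_space X p" and last: "\<xi>1 x < t (p - 1) \<and> t (p - 1) \<le> \<xi>2 x" using z xt by auto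
    have x: "x \<in> topspace (Xle X p)" and t: "t \<in> Ipow p" using dom by (auto simp: dom_space_def)
    have "lo i (restrict x {..<Suc i}) < t i \<and> t i \<le> hi i (restrict x {..<Suc i})" if i: "i < p" for i
    proof (cases "i = p - 1")
      case True
      moreover have "restrict x {..<Suc (p - 1)} = x"
        using x p by (auto simp: topspace_Xle PiE_def extensional_restrict)
      ultimately show ?thesis using last by (simp add: lo_def hi_def)
    next
      case False
      moreover have "restrict x {..<Suc i} \<in> topspace (Xle X (Suc i))"
        using i by (intro restrict_in_topspace_Xle[OF x]) simp
      ultimately show ?thesis using Ipow_mem[OF t i] by (simp add: lo_def hi_def)
    qed
    then show "z \<in> multiwedge_of X p lo hi" using dom xt by (simp add: mem_multiwedge_of)
  qed
  ultimately show ?thesis unfolding is_multiwedge_def by blast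
qed

lemma minimal_multiwedges_small_oscillation:
  fixes g :: "((nat \<Rightarrow> 'a) \<times> (nat \<Rightarrow> real)) set \<Rightarrow> (nat \<Rightarrow> 'a) \<Rightarrow> 'g::topological_group_add"
  assumes asc: "ascending_lcomplete X p Fs"
    and g: "\<And>C. minimal_multiwedge X p Fs C \<Longrightarrow>
        continuous_map (subtopology (Xle X p) (Xle X p closure_of (fst ` C))) euclidean (g C)"
    and U: "open U" "0 \<in> U" and x: "x \<in> topspace (Xle X p)"
  obtains Q where "openin (Xle X p) Q" "x \<in> Q"
    "\<forall>C. minimal_multiwedge X p Fs C \<longrightarrow> (\<forall>y\<in>Q \<inter> Xle X p closure_of (fst ` C).
        \<forall>y'\<in>Q \<inter> Xle X p closure_of (fst ` C). g C y - g C y' \<in> U)"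
proof -
  let ?J = "{C. minimal_multiwedge X p Fs C}" and ?K = "\<lambda>C. Xle X p closure_of (fst ` C)"
  obtain N where N: "openin (Xle X p) N" "x \<in> N" "finite {C. minimal_multiwedge X p Fs C \<and> fst ` C \<inter> N \<noteq> {}}"
    by (rule locally_finite_minimal_multiwedges[OF asc x])
  have "{C\<in>?J. ?K C \<inter> N \<noteq> {}} = {C. minimal_multiwedge X p Fs C \<and> fst ` C \<inter> N \<noteq> {}}"
    using N(1) openin_Int_closure_of_eq_empty[OF N(1)] by (auto simp: Int_commute)
  then have fin: "finite {C\<in>?J. ?K C \<inter> N \<noteq> {}}" using N(3) by simp
  have gJ: "continuous_map (subtopology (Xle X p) (?K C)) euclidean (g C)" if "C \<in> ?J" for C
    using g that by simp
  have closed: "closedin (Xle X p) (?K C)" for C by simp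
  obtain Q where "openin (Xle X p) Q" "x \<in> Q" "\<forall>C\<in>?J. \<forall>y\<in>Q \<inter> ?K C. \<forall>y'\<in>Q \<inter> ?K C. g C y - g C y' \<in> U"
    by (rule locally_finite_small_oscillation[where J="?J" and K="?K" and g=g, OF gJ closed N(1,2) fin U])
  then show thesis using that by simp
qed

lemma minimal_multiwedges_oscillation_cover:
  fixes g :: "((nat \<Rightarrow> 'a) \<times> (nat \<Rightarrow> real)) set \<Rightarrow> (nat \<Rightarrow> 'a) \<Rightarrow> 'g::topological_group_add"
  assumes asc: "ascending_lcomplete X p Fs"
    and g: "\<And>C. minimal_multiwedge X p Fs C \<Longrightarrow>
        continuous_map (subtopology (Xle X p) (Xle X p closure_of (fst ` C))) euclidean (g C)"
    and U: "open U" "0 \<in> U"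
  obtains Oc where "\<forall>x\<in>topspace (Xle X p). openin (Xle X p) (Oc x) \<and> x \<in> Oc x \<and>
      (\<forall>C. minimal_multiwedge X p Fs C \<longrightarrow> (\<forall>y\<in>Oc x \<inter> Xle X p closure_of (fst ` C).
        \<forall>y'\<in>Oc x \<inter> Xle X p closure_of (fst ` C). g C y - g C y' \<in> U))"
proof -
  have "\<forall>x\<in>topspace (Xle X p). \<exists>Q. openin (Xle X p) Q \<and> x \<in> Q \<and>
      (\<forall>C. minimal_multiwedge X p Fs C \<longrightarrow> (\<forall>y\<in>Q \<inter> Xle X p closure_of (fst ` C).
        \<forall>y'\<in>Q \<inter> Xle X p closure_of (fst ` C). g C y - g C y' \<in> U))"
  proof
    fix x assume x: "x \<in> topspace (Xle X p)"
    obtain Q where "openin (Xle X p) Q" "x \<in> Q" "\<forall>C. minimal_multiwedge X p Fs C \<longrightarrow>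
        (\<forall>y\<in>Q \<inter> Xle X p closure_of (fst ` C). \<forall>y'\<in>Q \<inter> Xle X p closure_of (fst ` C). g C y - g C y' \<in> U)"
      by (rule minimal_multiwedges_small_oscillation[OF asc g U x])
    then show "\<exists>Q. openin (Xle X p) Q \<and> x \<in> Q \<and> (\<forall>C. minimal_multiwedge X p Fs C \<longrightarrow>
        (\<forall>y\<in>Q \<inter> Xle X p closure_of (fst ` C). \<forall>y'\<in>Q \<inter> Xle X p closure_of (fst ` C). g C y - g C y' \<in> U))"
      by blast
  qed
  then show thesis using that by (rule bchoice[THEN exE])
qed

lemma lifts_on_labelled_layers:
  fixes g :: "'j \<Rightarrow> 'b \<Rightarrow> 'q::{ab_group_add, topological_group_add}"
    and \<pi> :: "'a::{ab_group_add, topological_group_add} \<Rightarrow> 'q" and s :: "'q \<Rightarrow> 'a"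
  assumes g: "\<And>j. j \<in> J \<Longrightarrow> continuous_map (subtopology Y (K j)) euclidean (g j)"
    and Oc: "\<forall>x\<in>topspace Y. \<forall>j\<in>J. \<forall>y\<in>Oc x \<inter> K j. \<forall>y'\<in>Oc x \<inter> K j. g j y - g j y' \<in> U"
    and label: "\<And>n y. y \<in> W n \<Longrightarrow> \<alpha> n y \<in> topspace Y \<and> y \<in> Oc (\<alpha> n y)"
      "\<And>n y. y \<in> W n \<Longrightarrow> \<exists>V. openin Y V \<and> y \<in> V \<and> (\<forall>y'\<in>V \<inter> W n. \<alpha> n y' = \<alpha> n y)"
    and s: "continuous_on U s" "\<And>u. u \<in> U \<Longrightarrow> \<pi> (s u) = u"
    and \<pi>_add: "\<And>u v. \<pi> (u + v) = \<pi> u + \<pi> v" and \<pi>_surj: "\<And>q. \<exists>a. \<pi> a = q"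
  obtains h where "\<forall>j\<in>J. \<forall>n. continuous_map (subtopology Y (K j \<inter> W n)) euclidean (h j n)
      \<and> (\<forall>y\<in>K j \<inter> W n. \<pi> (h j n y) = g j y)"
proof -
  have "\<exists>h. continuous_map (subtopology Y (K j \<inter> W n)) euclidean h \<and> (\<forall>y\<in>K j \<inter> W n. \<pi> (h y) = g j y)"
    if j: "j \<in> J" for j n
  proof -
    have lab: "y \<in> Oc (\<alpha> n y)" if "y \<in> K j \<inter> W n" for y
      using label(1)[of y n] that by simp
    have lab_const: "\<exists>V. openin Y V \<and> y \<in> V \<and> (\<forall>y'\<in>V \<inter> K j \<inter> W n. \<alpha> n y' = \<alpha> n y)"
      if "y \<in> K j \<inter> W n" for y
    proof -
      have "y \<in> W n" using that by simp
      then obtain V where "openin Y V" "y \<in> V" "\<forall>y'\<in>V \<inter> W n. \<alpha> n y' = \<alpha> n y"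
        using label(2) by blast
      then show ?thesis by blast
    qed
    have small: "g j y - g j y' \<in> U"
      if "z \<in> K j \<inter> W n" "y \<in> Oc (\<alpha> n z) \<inter> K j" "y' \<in> Oc (\<alpha> n z) \<inter> K j" for z y y'
    proof -
      have "\<alpha> n z \<in> topspace Y" using label(1)[of z n] that(1) by simp
      then have "\<forall>y\<in>Oc (\<alpha> n z) \<inter> K j. \<forall>y'\<in>Oc (\<alpha> n z) \<inter> K j. g j y - g j y' \<in> U"
        using Oc j by blast
      then show ?thesis using that(2,3) by blast
    qed
    obtain h where "continuous_map (subtopology Y (K j \<inter> W n)) euclidean h" "\<forall>y\<in>K j \<inter> W n. \<pi> (h y) = g j y"
      by (rule continuous_lift_through_local_section[OF g[OF j] lab lab_const small s \<pi>_add \<pi>_surj])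
    then show ?thesis by blast
  qed
  then have "\<forall>j n. \<exists>h. j \<in> J \<longrightarrow>
      continuous_map (subtopology Y (K j \<inter> W n)) euclidean h \<and> (\<forall>y\<in>K j \<inter> W n. \<pi> (h y) = g j y)"
    by blast
  then have "\<exists>h. \<forall>j n. j \<in> J \<longrightarrow>
      continuous_map (subtopology Y (K j \<inter> W n)) euclidean (h j n) \<and> (\<forall>y\<in>K j \<inter> W n. \<pi> (h j n y) = g j y)"
    by (simp only: choice_iff)
  then show thesis using that by blast
qed

text \<open>Every minimal multiwedge of the refined tuple lies in a single old minimal multiwedge and
  a single layer of \<mu>.\<close>

lemma semi_controls_refinement:
  fixes \<mu> :: "nat \<Rightarrow> (nat \<Rightarrow> 'a) \<Rightarrow> real" and F :: "(nat \<Rightarrow> 'a) \<times> (nat \<Rightarrow> real) \<Rightarrow> 'g::topological_space"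
  assumes asc: "ascending_lcomplete X p Fs" and asc': "ascending_lcomplete X p Fs'"
    and sub: "\<And>i. i < p \<Longrightarrow> Fs i \<subseteq> Fs' i" and p: "0 < p" and \<mu>: "\<And>n. \<mu> n \<in> Fs' (p - 1)"
    and layer: "\<And>x t. (x, t) \<in> dom_space X p \<Longrightarrow> \<exists>n. \<mu> (Suc n) x < t (p - 1) \<and> t (p - 1) \<le> \<mu> n x"
    and W: "\<And>n. Xle X p closure_of {x. \<mu> (Suc n) x < \<mu> n x} \<subseteq> W n"
    and h: "\<And>C n. minimal_multiwedge X p Fs C \<Longrightarrow>
       continuous_map (subtopology (Xle X p) (Xle X p closure_of (fst ` C) \<inter> W n)) euclidean (h C n)"
    and F: "\<And>C n x t. minimal_multiwedge X p Fs C \<Longrightarrow> (x, t) \<in> C \<Longrightarrow>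
       \<mu> (Suc n) x < t (p - 1) \<Longrightarrow> t (p - 1) \<le> \<mu> n x \<Longrightarrow> F (x, t) = h C n x"
  shows "semi_controls X p Fs' F"
  unfolding semi_controls_def
proof (intro conjI allI impI asc')
  fix C' assume C': "minimal_multiwedge X p Fs' C'"
  then obtain z where "z \<in> C'" unfolding minimal_multiwedge_def by blast
  then obtain x t where xt: "(x, t) \<in> C'" by (metis prod.collapse)
  have "is_multiwedge X p Fs' C'" using C' unfolding minimal_multiwedge_def by blast
  then have "C' \<subseteq> dom_space X p" by (rule is_multiwedge_subset_dom_space)
  with xt have xtd: "(x, t) \<in> dom_space X p" by blast
  obtain C where C: "minimal_multiwedge X p Fs C" "(x, t) \<in> C"
    by (rule minimal_multiwedge_through[OF asc xtd])
  obtain n where n: "\<mu> (Suc n) x < t (p - 1) \<and> t (p - 1) \<le> \<mu> n x" using layer[OF xtd] by blast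
  obtain \<xi>1 \<xi>2 where "\<forall>i<p. \<xi>1 i \<in> Fs i \<and> \<xi>2 i \<in> Fs i" "C = multiwedge_of X p \<xi>1 \<xi>2"
    using C(1) unfolding minimal_multiwedge_def is_multiwedge_def by blast
  then have "is_multiwedge X p Fs' C" using sub unfolding is_multiwedge_def by blast
  then have C'C: "C' \<subseteq> C" by (rule minimal_multiwedge_subset[OF asc' C' _ xt C(2)])
  let ?S = "{(x, t) \<in> dom_space X p. \<mu> (Suc n) x < t (p - 1) \<and> t (p - 1) \<le> \<mu> n x}"
  have "(x, t) \<in> ?S" using xtd n by simp
  then have C'S: "C' \<subseteq> ?S"
    by (rule minimal_multiwedge_subset[OF asc' C' is_multiwedge_last_coordinate[OF asc' p \<mu> \<mu>] xt])
  have Fh: "F w = h C n (fst w)" if w: "w \<in> C'" for w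
  proof -
    obtain y u where yu: "w = (y, u)" by fastforce
    have "\<mu> (Suc n) y < u (p - 1)" "u (p - 1) \<le> \<mu> n y" using C'S w yu by auto
    moreover have "(y, u) \<in> C" using C'C w yu by blast
    ultimately show ?thesis using F[OF C(1)] yu by simp
  qed
  have "fst ` C' \<subseteq> {x. \<mu> (Suc n) x < \<mu> n x}" using C'S by force
  then have "Xle X p closure_of (fst ` C') \<subseteq> W n" using closure_of_mono W by blast
  moreover have "Xle X p closure_of (fst ` C') \<subseteq> Xle X p closure_of (fst ` C)"
    using C'C by (intro closure_of_mono image_mono)
  ultimately have "continuous_map (subtopology (Xle X p) (Xle X p closure_of (fst ` C'))) euclidean (h C n)"
    by (intro continuous_map_from_subtopology_mono[OF h[OF C(1)]]) blast
  with Fh show "\<exists>fC. continuous_map (subtopology (Xle X p) (Xle X p closure_of (fst ` C'))) euclidean fC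
      \<and> (\<forall>z\<in>C'. F z = fC (fst z))" by blast
qed

lemma metrizable_space_Xle: "(\<And>i. i < p \<Longrightarrow> metrizable_space (X i)) \<Longrightarrow> metrizable_space (Xle X p)"
  unfolding Xle_def by (subst metrizable_space_product_topology) (auto intro: countable_finite)

text \<open>Equal to h C n x at points (x, t) of the minimal multiwedge C in the layer
  \<mu> (n+1) x < t_p \<le> \<mu> n x; the choices are arbitrary outside dom_space.\<close>

definition layered_glue ::
    "(nat \<Rightarrow> 'a topology) \<Rightarrow> nat \<Rightarrow> (nat \<Rightarrow> ((nat \<Rightarrow> 'a) \<Rightarrow> real) set) \<Rightarrow> (nat \<Rightarrow> (nat \<Rightarrow> 'a) \<Rightarrow> real)
     \<Rightarrow> (((nat \<Rightarrow> 'a) \<times> (nat \<Rightarrow> real)) set \<Rightarrow> nat \<Rightarrow> (nat \<Rightarrow> 'a) \<Rightarrow> 'g)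
     \<Rightarrow> (nat \<Rightarrow> 'a) \<times> (nat \<Rightarrow> real) \<Rightarrow> 'g" where
  "layered_glue X p Fs \<mu> h z = h (SOME C. minimal_multiwedge X p Fs C \<and> z \<in> C)
     (THE n. \<mu> (Suc n) (fst z) < snd z (p - 1) \<and> snd z (p - 1) \<le> \<mu> n (fst z)) (fst z)"

lemma layered_glue_eq:
  assumes asc: "ascending_lcomplete X p Fs" and C: "minimal_multiwedge X p Fs C" "(x, t) \<in> C"
    and layer: "\<exists>!n. \<mu> (Suc n) x < t (p - 1) \<and> t (p - 1) \<le> \<mu> n x"
    and n: "\<mu> (Suc n) x < t (p - 1)" "t (p - 1) \<le> \<mu> n x"
  shows "layered_glue X p Fs \<mu> h (x, t) = h C n x"
proof -
  have "(SOME C. minimal_multiwedge X p Fs C \<and> (x, t) \<in> C) = C"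
  proof (rule some_equality)
    show "minimal_multiwedge X p Fs C \<and> (x, t) \<in> C" using C by blast
    show "C' = C" if "minimal_multiwedge X p Fs C' \<and> (x, t) \<in> C'" for C'
      using minimal_multiwedge_eq[OF asc _ C(1) _ C(2)] that by blast
  qed
  moreover have "(THE n. \<mu> (Suc n) x < t (p - 1) \<and> t (p - 1) \<le> \<mu> n x) = n"
    by (rule the1_equality[OF layer]) (use n in simp)
  ultimately show ?thesis by (simp add: layered_glue_def)
qed

lemma semi_layered_lift_through_local_section:
  fixes X :: "nat \<Rightarrow> 'x topology" and f :: "(nat \<Rightarrow> 'x) \<times> (nat \<Rightarrow> real) \<Rightarrow> 'q::{ab_group_add, topological_group_add}"
    and \<pi> :: "'a::{ab_group_add, topological_group_add} \<Rightarrow> 'q" and s :: "'q \<Rightarrow> 'a"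
  assumes p: "0 < p" and metr: "\<And>i. i < p \<Longrightarrow> metrizable_space (X i)"
    and \<pi>_add: "\<And>u v. \<pi> (u + v) = \<pi> u + \<pi> v" and \<pi>_surj: "\<And>q. \<exists>a. \<pi> a = q"
    and U: "open U" "0 \<in> U" and s: "continuous_on U s" "\<And>u. u \<in> U \<Longrightarrow> \<pi> (s u) = u"
    and f: "semi_layered X p f"
  obtains F where "semi_layered X p F" "\<And>z. z \<in> dom_space X p \<Longrightarrow> \<pi> (F z) = f z"
proof -
  let ?Y = "Xle X p" and ?K = "\<lambda>C. Xle X p closure_of (fst ` C)"
  obtain Fs where ctrl: "semi_controls X p Fs f" using f unfolding semi_layered_def by blast
  then have asc: "ascending_lcomplete X p Fs" unfolding semi_controls_def by blast
  have "\<forall>C. \<exists>gC. minimal_multiwedge X p Fs C \<longrightarrow>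
      continuous_map (subtopology ?Y (?K C)) euclidean gC \<and> (\<forall>z\<in>C. f z = gC (fst z))"
    using ctrl unfolding semi_controls_def by blast
  then obtain g where g: "\<forall>C. minimal_multiwedge X p Fs C \<longrightarrow>
      continuous_map (subtopology ?Y (?K C)) euclidean (g C) \<and> (\<forall>z\<in>C. f z = g C (fst z))"
    by (rule choice[THEN exE])
  then have gcont: "\<And>C. minimal_multiwedge X p Fs C \<Longrightarrow> continuous_map (subtopology ?Y (?K C)) euclidean (g C)"
    by blast
  obtain Oc where Oc: "\<forall>x\<in>topspace ?Y. openin ?Y (Oc x) \<and> x \<in> Oc x \<and> (\<forall>C. minimal_multiwedge X p Fs C
      \<longrightarrow> (\<forall>y\<in>Oc x \<inter> ?K C. \<forall>y'\<in>Oc x \<inter> ?K C. g C y - g C y' \<in> U))"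
    by (rule minimal_multiwedges_oscillation_cover[OF asc gcont U])
  then have Oc_cover: "\<And>x. x \<in> topspace ?Y \<Longrightarrow> openin ?Y (Oc x) \<and> x \<in> Oc x" by blast
  obtain \<mu> W \<alpha> where \<mu>: "\<And>n. continuous_map ?Y (subtopology euclideanreal {0..1}) (\<mu> n)"
      "\<And>n y. y \<notin> topspace ?Y \<Longrightarrow> \<mu> n y = 0" "\<And>y. y \<in> topspace ?Y \<Longrightarrow> \<mu> 0 y = 1"
      "\<And>n y. \<mu> (Suc n) y \<le> \<mu> n y"
      "\<And>y. y \<in> topspace ?Y \<Longrightarrow> \<exists>V n. openin ?Y V \<and> y \<in> V \<and> (\<forall>m\<ge>n. \<forall>y'\<in>V. \<mu> m y' = 0)"
    and W: "\<And>n. ?Y closure_of {y. \<mu> (Suc n) y < \<mu> n y} \<subseteq> W n"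
    and \<alpha>: "\<And>n y. y \<in> W n \<Longrightarrow> \<alpha> n y \<in> topspace ?Y \<and> y \<in> Oc (\<alpha> n y)"
      "\<And>n y. y \<in> W n \<Longrightarrow> \<exists>V. openin ?Y V \<and> y \<in> V \<and> (\<forall>y'\<in>V \<inter> W n. \<alpha> n y' = \<alpha> n y)"
    using metrizable_subordinate_vanishing_chain[OF metrizable_space_Xle[OF metr] Oc_cover] by blast
  obtain Fs' where Fs': "ascending_lcomplete X p Fs'" "\<And>i. i < p \<Longrightarrow> Fs i \<subseteq> Fs' i" "\<And>n. \<mu> n \<in> Fs' (p - 1)"
    using ascending_lcomplete_extend_last[OF asc p \<mu>(1,2,5)] by blast
  have gJ: "\<And>C. C \<in> {C. minimal_multiwedge X p Fs C} \<Longrightarrow> continuous_map (subtopology ?Y (?K C)) euclidean (g C)"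
    using gcont by simp
  have osc: "\<forall>x\<in>topspace ?Y. \<forall>C\<in>{C. minimal_multiwedge X p Fs C}.
      \<forall>y\<in>Oc x \<inter> ?K C. \<forall>y'\<in>Oc x \<inter> ?K C. g C y - g C y' \<in> U"
    using Oc by blast
  obtain h where h: "\<forall>C\<in>{C. minimal_multiwedge X p Fs C}. \<forall>n.
      continuous_map (subtopology ?Y (?K C \<inter> W n)) euclidean (h C n) \<and> (\<forall>y\<in>?K C \<inter> W n. \<pi> (h C n y) = g C y)"
    by (rule lifts_on_labelled_layers[where \<alpha>=\<alpha>, OF gJ osc \<alpha> s \<pi>_add \<pi>_surj])
  have layer: "\<exists>!n. \<mu> (Suc n) x < t (p - 1) \<and> t (p - 1) \<le> \<mu> n x" if "(x, t) \<in> dom_space X p" for x t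
  proof -
    have x: "x \<in> topspace ?Y" and t: "0 < t (p - 1)" "t (p - 1) \<le> 1"
      using that Ipow_mem[of t p "p - 1"] p by (auto simp: dom_space_def)
    obtain N where "\<mu> N x = 0" using \<mu>(5)[OF x] by blast
    then show ?thesis
      using \<mu>(3)[OF x] t by (intro ex1_layer_of_decreasing[where f="\<lambda>n. \<mu> n x" and N=N] \<mu>(4)) auto
  qed
  have glue: "layered_glue X p Fs \<mu> h (x, t) = h C n x" if "minimal_multiwedge X p Fs C" "(x, t) \<in> C"
      "\<mu> (Suc n) x < t (p - 1)" "t (p - 1) \<le> \<mu> n x" for C n x t
  proof -
    have "is_multiwedge X p Fs C" using that(1) unfolding minimal_multiwedge_def by blast
    then have "(x, t) \<in> dom_space X p" using is_multiwedge_subset_dom_space that(2) by blast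
    from layer[OF this] show ?thesis by (rule layered_glue_eq[where \<mu>=\<mu> and n=n, OF asc that(1,2) _ that(3,4)])
  qed
  have "semi_controls X p Fs' (layered_glue X p Fs \<mu> h)"
  proof (rule semi_controls_refinement[where h=h, OF asc Fs'(1,2) p Fs'(3)])
    show "\<exists>n. \<mu> (Suc n) x < t (p - 1) \<and> t (p - 1) \<le> \<mu> n x" if "(x, t) \<in> dom_space X p" for x t
      using layer[OF that] by blast
    show "Xle X p closure_of {x. \<mu> (Suc n) x < \<mu> n x} \<subseteq> W n" for n by (rule W)
    show "continuous_map (subtopology ?Y (?K C \<inter> W n)) euclidean (h C n)"
      if "minimal_multiwedge X p Fs C" for C n using h that by blast
  qed (simp_all add: glue)
  moreover have "\<pi> (layered_glue X p Fs \<mu> h z) = f z" if z: "z \<in> dom_space X p" for z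
  proof -
    obtain x t where xt: "z = (x, t)" by fastforce
    with z have x: "x \<in> topspace ?Y" by (simp add: dom_space_def)
    obtain C where C: "minimal_multiwedge X p Fs C" "(x, t) \<in> C"
      using minimal_multiwedge_through[OF asc] z xt by blast
    obtain n where n: "\<mu> (Suc n) x < t (p - 1)" "t (p - 1) \<le> \<mu> n x" using layer z xt by blast
    have "x \<in> ?K C" using closure_of_subset_Int[of ?Y "fst ` C"] x C(2) by force
    moreover have "x \<in> W n" using closure_of_subset_Int W[of n] x n by fastforce
    ultimately have "\<pi> (h C n x) = g C x" using h C(1) by blast
    moreover have "f z = g C x" using g C xt by force
    ultimately show ?thesis using glue[OF C n] xt by simp
  qed
  ultimately show thesis using that unfolding semi_layered_def by blast
qed

lemma semi_layered_zero: "semi_layered X 0 F"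
proof -
  let ?pt = "(\<lambda>_::nat. undefined, \<lambda>_::nat. undefined)"
  have dom: "dom_space X 0 = {?pt}" by (simp add: dom_space_def topspace_Xle Ipow_def)
  have "semi_controls X 0 (\<lambda>_. {}) F"
    unfolding semi_controls_def
  proof (intro conjI allI impI)
    show "ascending_lcomplete X 0 (\<lambda>_. {})" by (simp add: ascending_lcomplete_def)
    fix C assume "minimal_multiwedge X 0 (\<lambda>_. {}) C"
    then have "is_multiwedge X 0 (\<lambda>_. {}) C" unfolding minimal_multiwedge_def by (elim conjE)
    then have "C \<subseteq> {?pt}" using is_multiwedge_subset_dom_space dom by metis
    then show "\<exists>fC. continuous_map (subtopology (Xle X 0) (Xle X 0 closure_of (fst ` C))) euclidean fC
        \<and> (\<forall>z\<in>C. F z = fC (fst z))"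
      by (intro exI[of _ "\<lambda>_. F ?pt"]) auto
  qed
  then show ?thesis unfolding semi_layered_def by blast
qed

theorem proposition5p5:
  fixes X :: "nat \<Rightarrow> 'x topology" and p :: nat
    and \<iota> :: "'b::{ab_group_add, topological_group_add, t2_space} \<Rightarrow> 'a::{ab_group_add, topological_group_add, t2_space}"
    and \<pi> :: "'a \<Rightarrow> 'q::{ab_group_add, topological_group_add, t2_space}"
    and f :: "(nat \<Rightarrow> 'x) \<times> (nat \<Rightarrow> real) \<Rightarrow> 'q"
  assumes metr: "\<forall>i<p. metrizable_space (X i)"
    and iota_hom: "\<forall>u v. \<iota> (u + v) = \<iota> u + \<iota> v"
    and iota_emb: "embedding_map euclidean euclidean \<iota>"
    and pi_hom: "\<forall>u v. \<pi> (u + v) = \<pi> u + \<pi> v"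
    and pi_quot: "quotient_map euclidean euclidean \<pi>"
    and exact: "range \<iota> = {a. \<pi> a = 0}"
    and loc_sect: "\<exists>U s. open U \<and> (0::'q) \<in> U \<and> continuous_on U s \<and> (\<forall>y\<in>U. \<pi> (s y) = y)"
    and f_sl: "semi_layered X p f"
  shows "\<exists>F :: (nat \<Rightarrow> 'x) \<times> (nat \<Rightarrow> real) \<Rightarrow> 'a.
           semi_layered X p F \<and> (\<forall>z\<in>dom_space X p. \<pi> (F z) = f z)"
proof -
  have \<pi>_surj: "\<exists>a. \<pi> a = q" for q
    using pi_quot unfolding quotient_map_def by (metis UNIV_I imageE topspace_euclidean)
  obtain U s where U: "open U" "0 \<in> U" and s: "continuous_on U s" "\<And>u. u \<in> U \<Longrightarrow> \<pi> (s u) = u"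
    using loc_sect by blast
  show ?thesis
  proof (cases "p = 0")
    case True
    have "\<pi> (SOME a. \<pi> a = f z) = f z" for z using someI_ex[OF \<pi>_surj] .
    then show ?thesis
      using True semi_layered_zero by (intro exI[of _ "\<lambda>z. SOME a. \<pi> a = f z"]) simp
  next
    case False
    then obtain F where "semi_layered X p F" "\<And>z. z \<in> dom_space X p \<Longrightarrow> \<pi> (F z) = f z"
      using semi_layered_lift_through_local_section[OF _ _ _ \<pi>_surj U s f_sl] metr pi_hom by blast
    then show ?thesis by blast
  qed
qed

end
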